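(* Let $\varphi$ satisfy conditions (1)–(5) and let $\psi$ be as defined below. Let $D\subset\mathbb R^n$, $n\ge2$, be a bounded domain. If $D$ is a $\psi$-John domain, then $D$ is a $\varphi$-cigar John domain. Conversely, if $D$ is a $\varphi$-cigar John domain with constant $c_J$, then $D$ is a $\psi$-John domain with constants $$\alpha=\frac{c_J\,\varphi(1)\left(\max\left\{2,\frac{c_J\operatorname{diam}(D)}{\varphi(1)}\right\}\right)^2}{\psi\!\left(\frac1{2c_J}\psi\!\left(\frac14\operatorname{diam}(D)\right)\right)},\qquad \beta=\max\left\{2,\frac{c_J\operatorname{diam}(D)}{\varphi(1)}\right\}.$$
   Context: Conditions on $\varphi:[0,\infty)\to[0,\infty)$: (1) continuous; (2) strictly increasing; (3) $\varphi(0)=\lim_{t\to0^+}\varphi(t)=0$; (4) there is $C_\varphi\ge1$ with $\varphi(t_1)/t_1\le C_\varphi\,\varphi(t_2)/t_2$ whenever $0<t_1\le t_2$; (5) there is $C^{\Delta_2}_\varphi\ge1$ with $\varphi(2t)\le C^{\Delta_2}_\varphi\varphi(t)$ for all $t>0$. Define $\psi(t)=\varphi(t)$ for $0\le t\le1$, $\psi(t)=\varphi(1)t$ for $t\ge1$. $\varphi$-cigar John domain: a (bounded or unbounded) domain $D\subset\mathbb R^n$ is a $\varphi$-cigar John domain with constant $c_J>0$ if every pair of points $a,b\in D$ can be joined by a rectifiable arc $E\subset D$ with endpoints $a,b$ such that $\bigcup\{B(x,\psi(q(x))/c_J):x\in E\setminus\{a,b\}\}\subset D$, where for $x\in E$,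 $q(x)=\min\{\ell(E[a,x]),\ell(E[x,b])\}$, $E[x,y]$ denotes the subarc between $x$ and $y$ and $\ell$ denotes length. $\psi$-John domain: a bounded domain $D\subset\mathbb R^n$ is a $\psi$-John domain with constants $\alpha,\beta\in(0,\infty)$ if there is a point $x_0\in D$ such that each $x\in D$ can be joined to $x_0$ by a rectifiable curve $\gamma:[0,\ell(\gamma)]\to D$ parametrized by arc length with $\gamma(0)=x$, $\gamma(\ell(\gamma))=x_0$, $\ell(\gamma)\le\beta$, and $\psi(t)\le\frac{\alpha}{\ell(\gamma)}\operatorname{dist}(\gamma(t),\partial D)$ for all $t\in[0,\ell(\gamma)]$. *)

theory Defs
  imports "HOL-Analysis.Analysis"
begin

definition phi_cond :: "(real \<Rightarrow> real) \<Rightarrow> bool" where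
  "phi_cond \<phi> \<longleftrightarrow>
     (\<forall>t\<ge>0. \<phi> t \<ge> 0) \<and>
     continuous_on {0..} \<phi> \<and>
     strict_mono_on {0..} \<phi> \<and>
     \<phi> 0 = 0 \<and> (\<phi> \<longlongrightarrow> 0) (at_right 0) \<and>
     (\<exists>C\<ge>1. \<forall>t1 t2. 0 < t1 \<and> t1 \<le> t2 \<longrightarrow> \<phi> t1 / t1 \<le> C * (\<phi> t2 / t2)) \<and>
     (\<exists>C\<ge>1. \<forall>t>0. \<phi> (2 * t) \<le> C * \<phi> t)"

definition psi :: "(real \<Rightarrow> real) \<Rightarrow> real \<Rightarrow> real" where
  "psi \<phi> t = (if t \<le> 1 then \<phi> t else \<phi> 1 * t)"

definition variation :: "(real \<Rightarrow> 'a::metric_space) \<Rightarrow> real \<Rightarrow> real \<Rightarrow> ereal" where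
  "variation g a b =
     (SUP ts \<in> {ts. sorted ts \<and> set ts \<subseteq> {a..b}}.
        ereal (\<Sum>i<length ts - 1. dist (g (ts ! i)) (g (ts ! Suc i))))"

definition curve_length :: "(real \<Rightarrow> 'a::metric_space) \<Rightarrow> real \<Rightarrow> real \<Rightarrow> real" where
  "curve_length g a b = real_of_ereal (variation g a b)"

text \<open>phi-cigar John domain with constant cJ. An arc is an injective path
  g : [0,1] -> R^n; the subarc E[a,g t] is g restricted to [0,t], and E[g t,b] is
  g restricted to [t,1].\<close>
definition cigar_John :: "(real \<Rightarrow> real) \<Rightarrow> 'a::euclidean_space set \<Rightarrow> real \<Rightarrow> bool" where
  "cigar_John \<phi> D cJ \<longleftrightarrow> cJ > 0 \<and>
     (\<forall>a\<in>D. \<forall>b\<in>D. a \<noteq> b \<longrightarrow>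
        (\<exists>g. arc g \<and> pathstart g = a \<and> pathfinish g = b \<and> path_image g \<subseteq> D \<and>
             variation g 0 1 < \<infinity> \<and>
             (\<forall>t\<in>{0<..<1}.
                ball (g t) (psi \<phi> (min (curve_length g 0 t) (curve_length g t 1)) / cJ) \<subseteq> D)))"

definition psi_John :: "(real \<Rightarrow> real) \<Rightarrow> 'a::euclidean_space set \<Rightarrow> real \<Rightarrow> real \<Rightarrow> bool" where
  "psi_John \<psi> D \<alpha> \<beta> \<longleftrightarrow> bounded D \<and> \<alpha> > 0 \<and> \<beta> > 0 \<and>
     (\<exists>x0\<in>D. \<forall>x\<in>D. \<exists>(\<gamma>::real \<Rightarrow> 'a) L.
        0 \<le> L \<and> L \<le> \<beta> \<and> continuous_on {0..L} \<gamma> \<and> \<gamma> ` {0..L} \<subseteq> D \<and>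
        \<gamma> 0 = x \<and> \<gamma> L = x0 \<and>
        (\<forall>s t. 0 \<le> s \<and> s \<le> t \<and> t \<le> L \<longrightarrow> variation \<gamma> s t = ereal (t - s)) \<and>
        (\<forall>t\<in>{0..L}. \<psi> t \<le> \<alpha> / L * infdist (\<gamma> t) (frontier D)))"

end

theory Submission
  imports Defs
begin

text \<open>A \<open>\<psi>\<close>-John domain has a centre \<open>x0\<close> joined to every point by a carrot: a curve \<open>\<gamma>\<close>
  parametrised by arc length with \<open>\<psi>(t) \<le> c \<cdot> dist(\<gamma> t, \<partial>D)\<close>. Two carrots meeting at \<open>x0\<close>
  form a path from \<open>a\<close> to \<open>b\<close> along which \<open>\<psi>\<close> of the smaller of the two lengths to the endpoints
  is controlled by the distance to the boundary. Erasing the loops of this path (via a minimal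
  closed set of times, given by Brouwer's reduction theorem) yields an arc whose lengths to the
  endpoints are no larger, hence a cigar arc.

  Conversely, in a cigar John domain the midpoint of a cigar arc between two far apart points
  is a deep point \<open>x0\<close>. The cigar arc from any point to \<open>x0\<close> is a John curve: its length is at
  most \<open>\<beta>\<close> because its middle ball fits into \<open>D\<close>, on its first half the cigar balls give the John
  condition directly, and on its second half it stays at distance \<open>\<psi>(s)/c\<^sub>J\<close> from the boundary,
  where \<open>s = \<psi>(diam D/4)/(2 c\<^sub>J)\<close> satisfies \<open>\<psi>(s) \<le> c\<^sub>J s\<close> because cigar balls start near
  the boundary.\<close>

section \<open>Length of curves\<close>
fun chord_sum :: "(real \<Rightarrow> 'a::metric_space) \<Rightarrow> real list \<Rightarrow> real" where
  "chord_sum g [] = 0"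
| "chord_sum g [x] = 0"
| "chord_sum g (x # y # zs) = dist (g x) (g y) + chord_sum g (y # zs)"

definition partitions :: "real \<Rightarrow> real \<Rightarrow> real list set" where
  "partitions a b = {ts. sorted ts \<and> set ts \<subseteq> {a..b}}"

definition arclength_parametrized :: "(real \<Rightarrow> 'a::metric_space) \<Rightarrow> real \<Rightarrow> bool" where
  "arclength_parametrized \<gamma> L \<longleftrightarrow>
     (\<forall>s t. 0 \<le> s \<and> s \<le> t \<and> t \<le> L \<longrightarrow> variation \<gamma> s t = ereal (t - s))"

lemma sum_dist_eq_chord_sum:
  "(\<Sum>i<length ts - 1. dist (g (ts ! i)) (g (ts ! Suc i))) = chord_sum g ts"
proof (induction g ts rule: chord_sum.induct)
  case (3 g x y zs)
  have "(\<Sum>i<length (x # y # zs) - 1. dist (g ((x # y # zs) ! i)) (g ((x # y # zs) ! Suc i)))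
      = dist (g x) (g y) + (\<Sum>i<length (y # zs) - 1. dist (g ((y # zs) ! i)) (g ((y # zs) ! Suc i)))"
    by (simp add: sum.lessThan_Suc_shift del: sum.lessThan_Suc)
  then show ?case using 3 by simp
qed simp_all

lemma variation_eq_SUP_chord_sum:
  "variation g a b = (SUP ts \<in> partitions a b. ereal (chord_sum g ts))"
  unfolding variation_def partitions_def sum_dist_eq_chord_sum ..

lemma chord_sum_le_variation: "ts \<in> partitions a b \<Longrightarrow> ereal (chord_sum g ts) \<le> variation g a b"
  unfolding variation_eq_SUP_chord_sum by (rule SUP_upper)

lemma variation_leI:
  "(\<And>ts. ts \<in> partitions a b \<Longrightarrow> ereal (chord_sum g ts) \<le> c) \<Longrightarrow> variation g a b \<le> c"
  unfolding variation_eq_SUP_chord_sum by (rule SUP_least)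

lemma variation_nonneg: "0 \<le> variation g a b"
  using chord_sum_le_variation[of "[]" a b g] by (simp add: partitions_def zero_ereal_def)

lemma dist_le_variation: "a \<le> b \<Longrightarrow> ereal (dist (g a) (g b)) \<le> variation g a b"
  using chord_sum_le_variation[of "[a, b]" a b g] by (simp add: partitions_def)

lemma variation_cong:
  assumes "\<And>z. z \<in> {a..b} \<Longrightarrow> g z = h z"
  shows "variation g a b = variation h a b"
proof -
  have "chord_sum g ts = chord_sum h ts" if "set ts \<subseteq> {a..b}" for ts
    using that assms by (induction ts rule: induct_list012) auto
  then show ?thesis
    unfolding variation_eq_SUP_chord_sum partitions_def by (intro SUP_cong) auto
qed

lemma variation_mono:
  assumes "a \<le> a'" "b' \<le> b"
  shows "variation g a' b' \<le> variation g a b"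
  unfolding variation_eq_SUP_chord_sum
  by (rule SUP_subset_mono) (use assms in \<open>auto simp: partitions_def\<close>)

lemma chord_sum_const: "set ts \<subseteq> {a} \<Longrightarrow> chord_sum g ts = 0"
  by (induction g ts rule: chord_sum.induct) auto

lemma variation_point [simp]: "variation g a a = 0"
  by (rule antisym[OF variation_leI variation_nonneg]) (auto simp: partitions_def chord_sum_const)

lemma chord_sum_append:
  "chord_sum g (xs @ ys) = chord_sum g xs + chord_sum g ys +
     (if xs \<noteq> [] \<and> ys \<noteq> [] then dist (g (last xs)) (g (hd ys)) else 0)"
proof (induction g xs rule: chord_sum.induct)
  case (2 g x)
  then show ?case by (cases ys) auto
qed auto

lemma chord_sum_append_le:
  "chord_sum g (xs @ ys) \<le> chord_sum g (xs @ [b]) + chord_sum g (b # ys)"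
  using dist_triangle[of "g (last xs)" "g (hd ys)" "g b"]
    chord_sum_append[of g xs ys] chord_sum_append[of g xs "[b]"] chord_sum_append[of g "[b]" ys]
  by auto

lemma sorted_eq_filter_le_append:
  assumes "sorted ts"
  shows "ts = filter (\<lambda>z. z \<le> b) ts @ filter (\<lambda>z. \<not> z \<le> b) ts"
  using assms
proof (induction ts)
  case (Cons x ts)
  show ?case
  proof (cases "x \<le> b")
    case False
    then have "\<forall>z\<in>set ts. \<not> z \<le> b" using Cons.prems by auto
    then show ?thesis using False by (simp add: filter_id_conv)
  qed (use Cons in simp)
qed simp

lemma partition_split:
  assumes "ts \<in> partitions a c" "a \<le> b" "b \<le> c"
  obtains xs ys where "ts = xs @ ys" "xs @ [b] \<in> partitions a b" "b # ys \<in> partitions b c"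
proof
  show "ts = filter (\<lambda>z. z \<le> b) ts @ filter (\<lambda>z. \<not> z \<le> b) ts"
    using assms(1) sorted_eq_filter_le_append unfolding partitions_def by blast
  show "filter (\<lambda>z. z \<le> b) ts @ [b] \<in> partitions a b"
    "b # filter (\<lambda>z. \<not> z \<le> b) ts \<in> partitions b c"
    using assms unfolding partitions_def by (auto simp: sorted_append sorted_wrt_filter)
qed

lemma variation_add:
  assumes "a \<le> b" "b \<le> c"
  shows "variation g a c = variation g a b + variation g b c"
proof (rule antisym)
  show "variation g a c \<le> variation g a b + variation g b c"
  proof (rule variation_leI)
    fix ts assume "ts \<in> partitions a c"
    then obtain xs ys where split: "ts = xs @ ys"
      and "xs @ [b] \<in> partitions a b" "b # ys \<in> partitions b c"
      using partition_split assms by blast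
    then have "ereal (chord_sum g (xs @ [b])) + ereal (chord_sum g (b # ys))
        \<le> variation g a b + variation g b c"
      by (intro add_mono chord_sum_le_variation)
    moreover have "chord_sum g ts \<le> chord_sum g (xs @ [b]) + chord_sum g (b # ys)"
      unfolding split by (rule chord_sum_append_le)
    ultimately show "ereal (chord_sum g ts) \<le> variation g a b + variation g b c"
      by (metis ereal_less_eq(3) order_trans plus_ereal.simps(1))
  qed
next
  have le: "ereal (chord_sum g xs) + ereal (chord_sum g ys) \<le> variation g a c"
    if xs: "xs \<in> partitions a b" and ys: "ys \<in> partitions b c" for xs ys
  proof -
    have "xs @ ys \<in> partitions a c"
      using xs ys assms unfolding partitions_def
      by (auto simp: sorted_append subset_iff intro: order_trans[of _ b])
    then have "ereal (chord_sum g (xs @ ys)) \<le> variation g a c" by (rule chord_sum_le_variation)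
    moreover have "chord_sum g xs + chord_sum g ys \<le> chord_sum g (xs @ ys)"
      by (simp add: chord_sum_append)
    ultimately show ?thesis by (metis ereal_less_eq(3) order_trans plus_ereal.simps(1))
  qed
  have ne: "partitions a b \<noteq> {}" "partitions b c \<noteq> {}"
    by (auto simp: partitions_def intro: exI[of _ "[]"])
  have "variation g a b + variation g b c
      = (SUP xs\<in>partitions a b. ereal (chord_sum g xs) + variation g b c)"
    unfolding variation_eq_SUP_chord_sum[of g a b]
    by (rule SUP_ereal_add_left[symmetric]) (use ne variation_nonneg[of g b c] in auto)
  also have "\<dots> = (SUP xs\<in>partitions a b. SUP ys\<in>partitions b c.
                     ereal (chord_sum g xs) + ereal (chord_sum g ys))"
    unfolding variation_eq_SUP_chord_sum[of g b c]
    by (intro SUP_cong refl SUP_ereal_add_right[symmetric]) (use ne in auto)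
  also have "\<dots> \<le> variation g a c"
    by (intro SUP_least le)
  finally show "variation g a b + variation g b c \<le> variation g a c" .
qed

lemma chord_sum_map: "chord_sum (g \<circ> f) ts = chord_sum g (map f ts)"
  by (induction ts rule: induct_list012) auto

lemma variation_comp_le:
  assumes "mono_on {s..t} f" "s \<le> t"
  shows "variation (g \<circ> f) s t \<le> variation g (f s) (f t)"
proof (rule variation_leI)
  fix ts assume ts: "ts \<in> partitions s t"
  have "map f ts \<in> partitions (f s) (f t)"
    using ts assms unfolding partitions_def
    by (auto simp: sorted_map mono_on_def subset_iff intro!: sorted_wrt_mono_rel[of _ "(\<le>)"])
  then show "ereal (chord_sum (g \<circ> f) ts) \<le> variation g (f s) (f t)"
    unfolding chord_sum_map by (rule chord_sum_le_variation)
qed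

text \<open>Every partition of \<open>[f s, f t]\<close> lifts to a partition of \<open>[s, t]\<close> through the least
  preimages, which are monotone by the intermediate value theorem.\<close>
lemma le_variation_comp:
  assumes cont: "continuous_on {s..t} f" and "s \<le> t" and "f s \<le> f t"
  shows "variation g (f s) (f t) \<le> variation (g \<circ> f) s t"
proof (rule variation_leI)
  define least_preimage where "least_preimage y = Inf {z \<in> {s..t}. f z = y}" for y
  have ne: "{z \<in> {s..t}. f z = y} \<noteq> {}" if "y \<in> {f s..f t}" for y
    using IVT'[of f s y t] that cont \<open>s \<le> t\<close> by auto
  have preimage: "least_preimage y \<in> {z \<in> {s..t}. f z = y}" if "y \<in> {f s..f t}" for y
    unfolding least_preimage_def using ne[OF that] continuous_closed_preimage_constant[OF cont]
    by (intro closed_contains_Inf) (auto intro!: bdd_belowI[of _ s])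
  have mono: "least_preimage y1 \<le> least_preimage y2"
    if y1: "y1 \<in> {f s..f t}" and y2: "y2 \<in> {f s..f t}" and "y1 \<le> y2" for y1 y2
    unfolding least_preimage_def[of y2]
  proof (rule cInf_greatest[OF ne[OF y2]])
    fix z assume z: "z \<in> {z \<in> {s..t}. f z = y2}"
    then have "continuous_on {s..z} f" using cont by (auto intro: continuous_on_subset)
    then obtain z1 where "s \<le> z1" "z1 \<le> z" "f z1 = y1"
      using IVT'[of f s y1 z] y1 \<open>y1 \<le> y2\<close> z by auto
    then have "least_preimage y1 \<le> z1" unfolding least_preimage_def
      using z by (intro cInf_lower) (auto intro!: bdd_belowI[of _ s])
    then show "least_preimage y1 \<le> z" using \<open>z1 \<le> z\<close> by simp
  qed
  fix ys assume ys: "ys \<in> partitions (f s) (f t)"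
  have "map least_preimage ys \<in> partitions s t"
    using ys preimage unfolding partitions_def
    by (auto simp: sorted_map subset_iff intro!: mono sorted_wrt_mono_rel[of _ "(\<le>)"])
  moreover have "map f (map least_preimage ys) = ys"
    using ys preimage unfolding partitions_def by (induction ys) (auto simp: subset_iff)
  ultimately show "ereal (chord_sum g ys) \<le> variation (g \<circ> f) s t"
    using chord_sum_le_variation[of "map least_preimage ys" s t "g \<circ> f"] by (simp add: chord_sum_map)
qed

lemma variation_comp_mono:
  assumes "continuous_on {s..t} f" "mono_on {s..t} f" "s \<le> t"
  shows "variation (g \<circ> f) s t = variation g (f s) (f t)"
  using variation_comp_le[OF assms(2,3)] le_variation_comp[OF assms(1,3)] assms(2,3)
  by (intro antisym) (auto simp: mono_on_def)

lemma chord_sum_rev: "chord_sum g (rev xs) = chord_sum g xs"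
proof (induction xs rule: induct_list012)
  case (3 x y zs)
  have "chord_sum g (rev (x # y # zs)) = chord_sum g (rev (y # zs)) + dist (g y) (g x)"
    using chord_sum_append[of g "rev (y # zs)" "[x]"] by (simp add: last_rev)
  then show ?case using 3 by (simp add: dist_commute)
qed auto

lemma variation_reflect_le: "variation g s t \<le> variation (\<lambda>x. g (- x)) (- t) (- s)"
proof (rule variation_leI)
  fix ts assume ts: "ts \<in> partitions s t"
  have "rev (map uminus ts) \<in> partitions (-t) (-s)"
    using ts unfolding partitions_def by (auto simp: sorted_wrt_map sorted_wrt_rev)
  moreover have "chord_sum (\<lambda>x. g (- x)) (rev (map uminus ts)) = chord_sum g ts"
    by (simp add: chord_sum_rev chord_sum_map[symmetric] comp_def)
  ultimately show "ereal (chord_sum g ts) \<le> variation (\<lambda>x. g (- x)) (- t) (- s)"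
    by (metis chord_sum_le_variation)
qed

lemma variation_reflect: "variation (\<lambda>x. g (- x)) (- t) (- s) = variation g s t"
  using variation_reflect_le[of g s t] variation_reflect_le[of "\<lambda>x. g (- x)" "-t" "-s"]
  by (intro antisym) auto

lemma variation_eq_curve_length:
  assumes "variation g a b \<noteq> \<infinity>" "a \<le> a'" "b' \<le> b"
  shows "variation g a' b' = ereal (curve_length g a' b')"
proof -
  have "variation g a' b' \<noteq> \<infinity>" using variation_mono[OF assms(2,3), of g] assms(1) by auto
  then show ?thesis
    using variation_nonneg[of g a' b'] by (cases "variation g a' b'") (auto simp: curve_length_def)
qed

lemma curve_length_nonneg: "0 \<le> curve_length g a b"
  unfolding curve_length_def by (rule real_of_ereal_pos[OF variation_nonneg])

lemma curve_length_add:
  assumes "variation g a b \<noteq> \<infinity>" "a \<le> s" "s \<le> t" "t \<le> b"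
  shows "curve_length g a t = curve_length g a s + curve_length g s t"
  using variation_add[of a s t g] variation_eq_curve_length[OF assms(1)] assms by auto

lemma chord_sum_const_snoc:
  assumes "set xs \<subseteq> {c}"
  shows "chord_sum g (xs @ [t]) \<le> dist (g c) (g t)"
proof (cases "xs = []")
  case False
  then have "last xs = c" using assms last_in_set by fastforce
  then show ?thesis using False chord_sum_append[of g xs "[t]"] chord_sum_const[of xs c g] assms by simp
qed simp

text \<open>Take a partition of \<open>[t0, b]\<close> whose chord sum is within \<open>\<epsilon>/2\<close> of the length; for \<open>t\<close>
  closer to \<open>t0\<close> than all its points, the part of the curve over \<open>[t0, t]\<close> can then carry
  only the small chord \<open>dist (g t0) (g t)\<close>.\<close>
lemma curve_length_small_right:
  assumes cont: "continuous_on {t0..b} g" and fin: "variation g t0 b \<noteq> \<infinity>"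
    and "t0 < b" and "\<epsilon> > 0"
  obtains \<delta> where "\<delta> > 0" "\<And>t. t \<in> {t0..b} \<Longrightarrow> t < t0 + \<delta> \<Longrightarrow> curve_length g t0 t < \<epsilon>"
proof -
  have "ereal (curve_length g t0 b - \<epsilon>/2) < (SUP ts\<in>partitions t0 b. ereal (chord_sum g ts))"
    using variation_eq_curve_length[OF fin, of t0 b] \<open>\<epsilon> > 0\<close>
    unfolding variation_eq_SUP_chord_sum by simp
  then obtain ts where ts: "ts \<in> partitions t0 b" and close: "curve_length g t0 b - \<epsilon>/2 < chord_sum g ts"
    unfolding less_SUP_iff by auto
  define P where "P = {z \<in> set ts. t0 < z}"
  define gap where "gap = (if P = {} then b - t0 else Min P - t0)"
  have gap: "gap > 0" and gapP: "\<And>z. z \<in> P \<Longrightarrow> t0 + gap \<le> z"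
    unfolding gap_def using \<open>t0 < b\<close> by (auto simp: P_def)
  obtain d where d: "d > 0"
    and dd: "\<And>x. x \<in> {t0..b} \<Longrightarrow> dist x t0 < d \<Longrightarrow> dist (g x) (g t0) < \<epsilon>/2"
    using cont \<open>\<epsilon> > 0\<close> \<open>t0 < b\<close> unfolding continuous_on_iff
    by (metis atLeastAtMost_iff half_gt_zero less_eq_real_def order_refl)
  show ?thesis
  proof
    show "min gap d > 0" using gap d by simp
    fix t assume t: "t \<in> {t0..b}" "t < t0 + min gap d"
    then have "t < t0 + gap" by linarith
    obtain xs ys where tsx: "ts = xs @ ys" and "xs @ [t] \<in> partitions t0 t" "t # ys \<in> partitions t b"
      using partition_split[OF ts, of t] t by auto
    have "set xs \<subseteq> {t0}"
    proof
      fix z assume "z \<in> set xs"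
      moreover have "z \<notin> P" if "z \<in> set xs"
        using gapP[of z] that \<open>xs @ [t] \<in> partitions t0 t\<close> \<open>t < t0 + gap\<close>
        by (force simp: partitions_def)
      ultimately show "z \<in> {t0}" using \<open>xs @ [t] \<in> partitions t0 t\<close> tsx by (auto simp: P_def partitions_def)
    qed
    then have "chord_sum g (xs @ [t]) \<le> dist (g t0) (g t)" by (rule chord_sum_const_snoc)
    also have "\<dots> < \<epsilon>/2" using dd[of t] t by (auto simp: dist_commute dist_real_def)
    finally have "chord_sum g (xs @ [t]) < \<epsilon>/2" .
    moreover have "chord_sum g (t # ys) \<le> curve_length g t b"
      using chord_sum_le_variation[OF \<open>t # ys \<in> partitions t b\<close>, of g]
        variation_eq_curve_length[OF fin, of t b] t by simp
    moreover have "chord_sum g ts \<le> chord_sum g (xs @ [t]) + chord_sum g (t # ys)"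
      unfolding tsx by (rule chord_sum_append_le)
    moreover have "curve_length g t0 b = curve_length g t0 t + curve_length g t b"
      using t by (intro curve_length_add[OF fin]) auto
    ultimately show "curve_length g t0 t < \<epsilon>" using close by linarith
  qed
qed

lemma curve_length_small_left:
  assumes cont: "continuous_on {a..t0} g" and fin: "variation g a t0 \<noteq> \<infinity>"
    and "a < t0" and "\<epsilon> > 0"
  obtains \<delta> where "\<delta> > 0" "\<And>t. t \<in> {a..t0} \<Longrightarrow> t0 - \<delta> < t \<Longrightarrow> curve_length g t t0 < \<epsilon>"
proof -
  define h where "h = (\<lambda>x. g (- x))"
  have "continuous_on {-t0..-a} h" unfolding h_def
    by (intro continuous_on_compose2[OF cont]) (auto intro: continuous_intros)
  moreover have "variation h (-t0) (-a) \<noteq> \<infinity>" unfolding h_def variation_reflect using fin .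
  ultimately obtain \<delta> where "\<delta> > 0"
    and \<delta>: "\<And>t. t \<in> {-t0..-a} \<Longrightarrow> t < -t0 + \<delta> \<Longrightarrow> curve_length h (-t0) t < \<epsilon>"
    using curve_length_small_right[of "-t0" "-a" h \<epsilon>] \<open>a < t0\<close> \<open>\<epsilon> > 0\<close> by auto
  show ?thesis
  proof
    fix t assume "t \<in> {a..t0}" "t0 - \<delta> < t"
    then show "curve_length g t t0 < \<epsilon>"
      using \<delta>[of "-t"] unfolding curve_length_def h_def variation_reflect by auto
  qed (fact \<open>\<delta> > 0\<close>)
qed

lemma continuous_on_curve_length:
  assumes cont: "continuous_on {a..b} g" and fin: "variation g a b \<noteq> \<infinity>"
  shows "continuous_on {a..b} (curve_length g a)"
  unfolding continuous_on_iff
proof (intro ballI allI impI)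
  fix t0 e :: real assume t0: "t0 \<in> {a..b}" and e: "e > 0"
  obtain d1 where d1: "d1 > 0" "\<And>t. t \<in> {t0..b} \<Longrightarrow> t < t0 + d1 \<Longrightarrow> curve_length g t0 t < e"
  proof (cases "t0 < b")
    case True
    have "continuous_on {t0..b} g" using cont t0 by (auto intro: continuous_on_subset)
    moreover have "variation g t0 b \<noteq> \<infinity>" using variation_mono[of a t0 b b g] fin t0 by auto
    ultimately show ?thesis using curve_length_small_right[of t0 b g e] True e that by blast
  next
    case False
    show ?thesis
    proof (rule that[of 1])
      fix t assume "t \<in> {t0..b}"
      then have "t = t0" using False by auto
      then show "curve_length g t0 t < e" using e by (simp add: curve_length_def)
    qed simp
  qed
  obtain d2 where d2: "d2 > 0" "\<And>t. t \<in> {a..t0} \<Longrightarrow> t0 - d2 < t \<Longrightarrow> curve_length g t t0 < e"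
  proof (cases "a < t0")
    case True
    have "continuous_on {a..t0} g" using cont t0 by (auto intro: continuous_on_subset)
    moreover have "variation g a t0 \<noteq> \<infinity>" using variation_mono[of a a t0 b g] fin t0 by auto
    ultimately show ?thesis using curve_length_small_left[of a t0 g e] True e that by blast
  next
    case False
    show ?thesis
    proof (rule that[of 1])
      fix t assume "t \<in> {a..t0}"
      then have "t = t0" using False by auto
      then show "curve_length g t t0 < e" using e by (simp add: curve_length_def)
    qed simp
  qed
  show "\<exists>d>0. \<forall>t\<in>{a..b}. dist t t0 < d \<longrightarrow> dist (curve_length g a t) (curve_length g a t0) < e"
  proof (intro exI[of _ "min d1 d2"] conjI ballI impI)
    fix t assume t: "t \<in> {a..b}" "dist t t0 < min d1 d2"
    show "dist (curve_length g a t) (curve_length g a t0) < e"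
    proof (cases "t0 \<le> t")
      case True
      then show ?thesis
        using d1(2)[of t] t t0 curve_length_add[OF fin, of t0 t] curve_length_nonneg[of g t0 t]
        by (auto simp: dist_real_def)
    next
      case False
      then show ?thesis
        using d2(2)[of t] t t0 curve_length_add[OF fin, of t t0] curve_length_nonneg[of g t t0]
        by (auto simp: dist_real_def)
    qed
  qed (use d1 d2 in simp)
qed

lemma dist_le_arclength:
  assumes "arclength_parametrized \<gamma> L" "0 \<le> s" "s \<le> t" "t \<le> L"
  shows "dist (\<gamma> s) (\<gamma> t) \<le> t - s"
  using dist_le_variation[of s t \<gamma>] assms by (auto simp: arclength_parametrized_def)

lemma arclength_parametrized_0: "arclength_parametrized \<gamma> 0"
  unfolding arclength_parametrized_def
proof (intro allI impI)
  fix s t :: real assume "0 \<le> s \<and> s \<le> t \<and> t \<le> 0"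
  then have "s = 0" "t = 0" by auto
  then show "variation \<gamma> s t = ereal (t - s)" by simp
qed

lemma strict_mono_on_curve_length_arc:
  fixes g :: "real \<Rightarrow> 'a::metric_space"
  assumes arc: "arc g" and fin: "variation g 0 1 \<noteq> \<infinity>"
  shows "strict_mono_on {0..1} (curve_length g 0)"
proof (rule strict_mono_onI)
  fix u v :: real assume "u \<in> {0..1}" "v \<in> {0..1}" "u < v"
  then have "g u \<noteq> g v" using arc unfolding arc_def inj_on_def by force
  then have "0 < dist (g u) (g v)" by simp
  also have "dist (g u) (g v) \<le> curve_length g u v"
    using dist_le_variation[of u v g] variation_eq_curve_length[OF fin, of u v] \<open>u \<in> {0..1}\<close>
      \<open>v \<in> {0..1}\<close> \<open>u < v\<close> by simp
  also have "\<dots> = curve_length g 0 v - curve_length g 0 u"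
    using curve_length_add[OF fin, of u v] \<open>u \<in> {0..1}\<close> \<open>v \<in> {0..1}\<close> \<open>u < v\<close> by simp
  finally show "curve_length g 0 u < curve_length g 0 v" by simp
qed

lemma continuous_strict_mono_inverse:
  fixes S :: "real \<Rightarrow> real"
  assumes contS: "continuous_on {0..1} S" and Sstrict: "strict_mono_on {0..1} S"
    and S0: "S 0 = 0" and S1: "S 1 = L"
  obtains \<tau> where "continuous_on {0..L} \<tau>" "mono_on {0..L} \<tau>" "\<tau> ` {0..L} = {0..1}"
    "\<And>t. t \<in> {0..L} \<Longrightarrow> S (\<tau> t) = t" "\<And>u. u \<in> {0..1} \<Longrightarrow> \<tau> (S u) = u"
proof -
  have Smono: "mono_on {0..1} S" and injS: "inj_on S {0..1}"
    using strict_mono_on_imp_mono_on[OF Sstrict] strict_mono_on_imp_inj_on[OF Sstrict] by simp_all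
  have imS: "S ` {0..1} = {0..L}"
  proof
    show "S ` {0..1} \<subseteq> {0..L}"
    proof
      fix y assume "y \<in> S ` {0..1}"
      then obtain u where "u \<in> {0..1}" "y = S u" by auto
      then show "y \<in> {0..L}" using mono_onD[OF Smono, of 0 u] mono_onD[OF Smono, of u 1] S0 S1 by auto
    qed
    show "{0..L} \<subseteq> S ` {0..1}"
      using IVT'[of S 0 _ 1] contS S0 S1 by (force simp: image_iff)
  qed
  define \<tau> where "\<tau> = inv_into {0..1} S"
  have \<tau>S: "\<tau> (S u) = u" if "u \<in> {0..1}" for u unfolding \<tau>_def using injS that by simp
  have S\<tau>: "S (\<tau> t) = t" and \<tau>in: "\<tau> t \<in> {0..1}" if "t \<in> {0..L}" for t
    unfolding \<tau>_def using that imS by (metis f_inv_into_f, metis inv_into_into)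
  show ?thesis
  proof
    show "\<tau> ` {0..L} = {0..1}"
    proof
      show "{0..1} \<subseteq> \<tau> ` {0..L}"
      proof
        fix u :: real assume "u \<in> {0..1}"
        then have "S u \<in> {0..L}" "u = \<tau> (S u)" using imS \<tau>S by auto
        then show "u \<in> \<tau> ` {0..L}" by blast
      qed
    qed (use \<tau>in in blast)
    show "continuous_on {0..L} \<tau>"
      using continuous_on_inv[OF contS compact_Icc, of \<tau>] \<tau>S imS by auto
    show "mono_on {0..L} \<tau>"
    proof (rule mono_onI)
      fix s t assume "s \<in> {0..L}" "t \<in> {0..L}" "s \<le> t"
      then show "\<tau> s \<le> \<tau> t"
        using strict_mono_onD[OF Sstrict, of "\<tau> t" "\<tau> s"] \<tau>in[of s] \<tau>in[of t] S\<tau>[of s] S\<tau>[of t]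
        by fastforce
    qed
  qed (use S\<tau> \<tau>S in auto)
qed

lemma arc_arclength_reparametrization:
  fixes g :: "real \<Rightarrow> 'a::metric_space"
  assumes arc: "arc g" and fin: "variation g 0 1 \<noteq> \<infinity>"
  defines "L \<equiv> curve_length g 0 1"
  obtains \<gamma> where "continuous_on {0..L} \<gamma>" "\<gamma> ` {0..L} = path_image g" "\<gamma> 0 = g 0" "\<gamma> L = g 1"
    "arclength_parametrized \<gamma> L"
    "\<And>t. t \<in> {0..L} \<Longrightarrow> \<exists>u\<in>{0..1}. \<gamma> t = g u \<and> curve_length g 0 u = t \<and> curve_length g u 1 = L - t"
proof -
  define S where "S = curve_length g 0"
  have contg: "continuous_on {0..1} g" using arc by (simp add: arc_def path_def)
  have S1: "S 1 = L" by (simp add: S_def L_def)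
  have Sdiff: "S v - S u = curve_length g u v" if "0 \<le> u" "u \<le> v" "v \<le> 1" for u v
    unfolding S_def using curve_length_add[OF fin, of u v] that by simp
  obtain \<tau> where cont\<tau>: "continuous_on {0..L} \<tau>" and mono\<tau>: "mono_on {0..L} \<tau>"
    and im\<tau>: "\<tau> ` {0..L} = {0..1}"
    and S\<tau>: "\<And>t. t \<in> {0..L} \<Longrightarrow> S (\<tau> t) = t" and \<tau>S: "\<And>u. u \<in> {0..1} \<Longrightarrow> \<tau> (S u) = u"
  proof (rule continuous_strict_mono_inverse)
    show "continuous_on {0..1} S" unfolding S_def by (rule continuous_on_curve_length[OF contg fin])
    show "strict_mono_on {0..1} S" unfolding S_def by (rule strict_mono_on_curve_length_arc[OF arc fin])
    show "S 0 = 0" by (simp add: S_def curve_length_def)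
  qed (use S1 in blast)+
  have \<tau>in: "\<tau> t \<in> {0..1}" if "t \<in> {0..L}" for t using im\<tau> that by blast
  show ?thesis
  proof
    show "continuous_on {0..L} (g \<circ> \<tau>)"
      by (rule continuous_on_compose[OF cont\<tau>]) (use contg im\<tau> in simp)
    show "(g \<circ> \<tau>) ` {0..L} = path_image g" by (metis image_comp im\<tau> path_image_def)
    show "(g \<circ> \<tau>) 0 = g 0" "(g \<circ> \<tau>) L = g 1"
      using \<tau>S[of 0] \<tau>S[of 1] S1 by (simp_all add: S_def curve_length_def)
    show "arclength_parametrized (g \<circ> \<tau>) L"
      unfolding arclength_parametrized_def
    proof (intro allI impI)
      fix s t assume st: "0 \<le> s \<and> s \<le> t \<and> t \<le> L"
      have "variation (g \<circ> \<tau>) s t = variation g (\<tau> s) (\<tau> t)"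
        using st by (intro variation_comp_mono continuous_on_subset[OF cont\<tau>]
            mono_on_subset[OF mono\<tau>]) auto
      also have "\<dots> = ereal (t - s)"
        using variation_eq_curve_length[OF fin, of "\<tau> s" "\<tau> t"] Sdiff[of "\<tau> s" "\<tau> t"]
          \<tau>in[of s] \<tau>in[of t] S\<tau>[of s] S\<tau>[of t] mono_onD[OF mono\<tau>, of s t] st by auto
      finally show "variation (g \<circ> \<tau>) s t = ereal (t - s)" .
    qed
    fix t assume t: "t \<in> {0..L}"
    show "\<exists>u\<in>{0..1}. (g \<circ> \<tau>) t = g u \<and> curve_length g 0 u = t \<and> curve_length g u 1 = L - t"
      using \<tau>in[OF t] S\<tau>[OF t] Sdiff[of "\<tau> t" 1] S1 by (intro bexI[of _ "\<tau> t"]) (auto simp: S_def)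
  qed
qed

section \<open>Loop erasure\<close>

text \<open>The restrictions of \<open>p\<close> to the gaps of \<open>S\<close> are loops; a minimal such closed \<open>S\<close> leaves
  a path without loops.\<close>
definition cuts_loops :: "(real \<Rightarrow> 'a) \<Rightarrow> real set \<Rightarrow> bool" where
  "cuts_loops p S \<longleftrightarrow> S \<subseteq> {0..1} \<and> 0 \<in> S \<and> 1 \<in> S \<and>
     (\<forall>x\<in>S. \<forall>y\<in>S. x < y \<longrightarrow> {x<..<y} \<inter> S = {} \<longrightarrow> p x = p y)"

lemma compact_disjoint_decseq_Inter:
  fixes F :: "nat \<Rightarrow> 'a::heine_borel set"
  assumes "compact K" "\<And>n. closed (F n)" "\<And>n. F (Suc n) \<subseteq> F n" "K \<inter> \<Inter>(range F) = {}"
  obtains n where "K \<inter> F n = {}"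
proof (rule ccontr)
  assume "\<not> thesis"
  with that have "\<Inter>(range (\<lambda>n. K \<inter> F n)) \<noteq> {}"
    using assms(1,2) lift_Suc_antimono_le[of F, OF assms(3)] by (intro compact_nest) blast+
  with assms(4) show False by blast
qed

text \<open>If \<open>p x \<noteq> p y\<close> across a gap of the intersection, some \<open>F n\<close> misses \<open>[x + \<eta>, y - \<eta>]\<close> by
  compactness; the gap of \<open>F n\<close> containing it has ends close to \<open>x\<close> and \<open>y\<close>, where \<open>p\<close> must agree.\<close>
lemma cuts_loops_Inter:
  fixes p :: "real \<Rightarrow> 'a::metric_space"
  assumes "path p" and closed: "\<And>n. closed (F n)" and cuts: "\<And>n. cuts_loops p (F n)"
    and dec: "\<And>n. F (Suc n) \<subseteq> F n"
  shows "cuts_loops p (\<Inter>(range F))"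
  unfolding cuts_loops_def
proof (intro conjI ballI impI)
  show "\<Inter>(range F) \<subseteq> {0..1}" using cuts[of 0] by (auto simp: cuts_loops_def)
  show "0 \<in> \<Inter>(range F)" "1 \<in> \<Inter>(range F)" using cuts by (auto simp: cuts_loops_def)
  fix x y assume x: "x \<in> \<Inter>(range F)" and y: "y \<in> \<Inter>(range F)" and "x < y"
    and gap: "{x<..<y} \<inter> \<Inter>(range F) = {}"
  show "p x = p y"
  proof (rule ccontr)
    assume "p x \<noteq> p y"
    define \<epsilon> where "\<epsilon> = dist (p x) (p y) / 2"
    have "\<epsilon> > 0" using \<open>p x \<noteq> p y\<close> by (simp add: \<epsilon>_def)
    obtain \<delta> where "\<delta> > 0"
      and \<delta>: "\<And>u v. u \<in> {0..1} \<Longrightarrow> v \<in> {0..1} \<Longrightarrow> dist v u < \<delta> \<Longrightarrow> dist (p v) (p u) < \<epsilon>"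
      using compact_uniformly_continuous[OF _ compact_Icc] \<open>path p\<close> \<open>\<epsilon> > 0\<close>
      unfolding path_def uniformly_continuous_on_def by metis
    define \<eta> where "\<eta> = min (\<delta> / 2) ((y - x) / 3)"
    have "\<eta> \<le> \<delta> / 2" "\<eta> \<le> (y - x) / 3" unfolding \<eta>_def by (rule min.cobounded1 min.cobounded2)+
    then have \<eta>: "0 < \<eta>" "\<eta> < \<delta>" "x + \<eta> < y - \<eta>"
      using \<open>\<delta> > 0\<close> \<open>x < y\<close> by (auto simp: \<eta>_def)
    have "{x + \<eta>..y - \<eta>} \<subseteq> {x<..<y}" using \<eta>(1) by auto
    with gap have "{x + \<eta>..y - \<eta>} \<inter> \<Inter>(range F) = {}" by blast
    then obtain n where n: "{x + \<eta>..y - \<eta>} \<inter> F n = {}"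
      by (rule compact_disjoint_decseq_Inter[of "{x + \<eta>..y - \<eta>}" F, OF compact_Icc closed dec])
    have xy01: "x \<in> F n" "y \<in> F n" "x \<in> {0..1}" "y \<in> {0..1}"
      using x y cuts[of 0] by (auto simp: cuts_loops_def)
    define u where "u = Sup (F n \<inter> {x..x + \<eta>})"
    define v where "v = Inf (F n \<inter> {y - \<eta>..y})"
    have u: "u \<in> F n \<inter> {x..x + \<eta>}"
      unfolding u_def using xy01 \<eta> closed[of n]
      by (intro closed_contains_Sup) (auto intro!: bdd_aboveI[of _ "x + \<eta>"])
    have u_max: "\<And>t. t \<in> F n \<inter> {x..x + \<eta>} \<Longrightarrow> t \<le> u"
      unfolding u_def by (auto intro!: cSup_upper bdd_aboveI[of _ "x + \<eta>"])
    have v: "v \<in> F n \<inter> {y - \<eta>..y}"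
      unfolding v_def using xy01 \<eta> closed[of n]
      by (intro closed_contains_Inf) (auto intro!: bdd_belowI[of _ "y - \<eta>"])
    have v_min: "\<And>t. t \<in> F n \<inter> {y - \<eta>..y} \<Longrightarrow> v \<le> t"
      unfolding v_def by (auto intro!: cInf_lower bdd_belowI[of _ "y - \<eta>"])
    have "{u<..<v} \<inter> F n = {}"
    proof -
      have False if "t \<in> F n" "u < t" "t < v" for t
      proof -
        consider "t \<le> x + \<eta>" | "t \<in> {x + \<eta>..y - \<eta>}" | "y - \<eta> \<le> t" by fastforce
        then show False by cases (use that n u v u_max[of t] v_min[of t] in auto)
      qed
      then show ?thesis by auto
    qed
    then have "p u = p v" using cuts[of n] u v \<eta> by (auto simp: cuts_loops_def)
    moreover have "u \<in> {0..1}" "v \<in> {0..1}" using u v cuts[of n] by (auto simp: cuts_loops_def)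
    then have "dist (p u) (p x) < \<epsilon>" "dist (p v) (p y) < \<epsilon>"
      using u v \<eta> xy01 by (auto intro!: \<delta> simp: dist_real_def)
    ultimately have "dist (p x) (p y) < 2 * \<epsilon>"
      using dist_triangle2[of "p x" "p y" "p u"] by (simp add: dist_commute)
    then show False by (simp add: \<epsilon>_def)
  qed
qed

lemma exists_minimal_loop_cut:
  fixes p :: "real \<Rightarrow> 'a::metric_space"
  assumes "path p"
  obtains T where "closed T" "cuts_loops p T"
    "\<And>U. closed U \<Longrightarrow> cuts_loops p U \<Longrightarrow> U \<subseteq> T \<Longrightarrow> U = T"
proof -
  have "cuts_loops p {0..1}"
    unfolding cuts_loops_def by (auto dest: dense simp: disjoint_iff)
  then obtain T where "T \<subseteq> {0..1}" "closed T" "cuts_loops p T"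
    and min: "\<And>U. U \<subseteq> {0..1} \<Longrightarrow> closed U \<Longrightarrow> cuts_loops p U \<Longrightarrow> \<not> U \<subset> T"
    using Brouwer_reduction_theorem_gen[of "{0..1}" "cuts_loops p"] cuts_loops_Inter[OF assms]
    by blast
  then show ?thesis
    using that[of T] by (meson psubsetI subset_trans)
qed

definition last_before :: "real set \<Rightarrow> real \<Rightarrow> real" where
  "last_before T x = Sup (T \<inter> {0..x})"

lemma last_before_greatest:
  assumes "closed T" "0 \<in> T" "T \<subseteq> {0..1}" "0 \<le> x"
  shows "last_before T x \<in> T" "last_before T x \<le> x"
    "\<And>t. t \<in> T \<Longrightarrow> t \<le> x \<Longrightarrow> t \<le> last_before T x"
proof -
  have "last_before T x \<in> T \<inter> {0..x}"
    unfolding last_before_def using assms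
    by (intro closed_contains_Sup) (auto intro!: bdd_aboveI[of _ x])
  then show "last_before T x \<in> T" "last_before T x \<le> x" by auto
  fix t assume "t \<in> T" "t \<le> x"
  then show "t \<le> last_before T x"
    unfolding last_before_def using assms by (auto intro!: cSup_upper bdd_aboveI[of _ x])
qed

lemma mono_on_last_before:
  assumes "closed T" "0 \<in> T" "T \<subseteq> {0..1}"
  shows "mono_on {0..1} (last_before T)"
  by (rule mono_onI) (use last_before_greatest[OF assms] in \<open>meson atLeastAtMost_iff order_trans\<close>)

lemma gaps_of_last_before:
  assumes "closed T" "0 \<in> T" "T \<subseteq> {0..1}" "0 \<le> x"
  shows "{last_before T x<..x} \<inter> T = {}"
  using last_before_greatest[OF assms] by fastforce

lemma last_before_jump:
  fixes p :: "real \<Rightarrow> 'a"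
  assumes "closed T" "cuts_loops p T" "u \<in> {0..1}" "v \<in> {0..1}" "u \<le> v"
  obtains "p (last_before T v) = p (last_before T u)"
    | w where "w \<in> {u..v}" "last_before T v \<in> {w..v}" "p (last_before T u) = p w"
proof -
  have T: "0 \<in> T" "1 \<in> T" "T \<subseteq> {0..1}" and gap: "\<And>x y. x \<in> T \<Longrightarrow> y \<in> T \<Longrightarrow> x < y \<Longrightarrow>
    {x<..<y} \<inter> T = {} \<Longrightarrow> p x = p y"
    using assms(2) by (auto simp: cuts_loops_def)
  note \<sigma> = last_before_greatest[OF assms(1) T(1,3)]
  define w where "w = Inf (T \<inter> {u..1})"
  have "w \<in> T \<inter> {u..1}"
    unfolding w_def using T \<open>u \<in> {0..1}\<close> assms(1) by (intro closed_contains_Inf) auto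
  then have w: "w \<in> T" "u \<le> w" by auto
  have w_min: "\<And>t. t \<in> T \<Longrightarrow> u \<le> t \<Longrightarrow> w \<le> t"
    using T by (auto simp: w_def intro!: cInf_lower bdd_belowI[of _ u])
  have no_T: "{last_before T u<..<w} \<inter> T = {}"
    using gaps_of_last_before[OF assms(1) T(1,3), of u] w_min \<open>u \<in> {0..1}\<close>
    by (fastforce simp: not_le)
  have pw: "p (last_before T u) = p w"
  proof (cases "last_before T u < w")
    case False
    then show ?thesis using \<sigma>(2)[of u] w(2) \<open>u \<in> {0..1}\<close> by (metis atLeastAtMost_iff antisym_conv1 order.trans)
  qed (use gap[OF \<sigma>(1) w(1) _ no_T] \<open>u \<in> {0..1}\<close> in auto)
  show ?thesis
  proof (cases "w \<le> v")
    case True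
    then have "last_before T v \<in> {w..v}" using \<sigma>[of v] w \<open>v \<in> {0..1}\<close> by auto
    then show ?thesis using that(2) pw True w(2) by auto
  next
    case False
    have "last_before T u \<le> last_before T v"
      using mono_on_last_before[OF assms(1) T(1,3)] assms(3-5) by (auto simp: mono_on_def)
    moreover have "last_before T v \<in> T" "last_before T v < w"
      using \<sigma>[of v] False \<open>v \<in> {0..1}\<close> by auto
    ultimately have "last_before T v = last_before T u"
      using no_T by (metis IntI antisym_conv1 empty_iff greaterThanLessThan_iff)
    then show ?thesis using that(1) by simp
  qed
qed

lemma continuous_on_last_before:
  fixes p :: "real \<Rightarrow> 'a::metric_space"
  assumes "path p" "closed T" "cuts_loops p T"
  shows "continuous_on {0..1} (p \<circ> last_before T)"
proof -
  have T: "0 \<in> T" "T \<subseteq> {0..1}" using assms(3) by (auto simp: cuts_loops_def)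
  have close: "dist (p (last_before T u)) (p (last_before T v)) < \<epsilon>"
    if \<delta>: "\<And>s t. s \<in> {0..1} \<Longrightarrow> t \<in> {0..1} \<Longrightarrow> dist s t < \<delta> \<Longrightarrow> dist (p s) (p t) < \<epsilon>"
      and "\<epsilon> > 0" "u \<in> {0..1}" "v \<in> {0..1}" "u \<le> v" "v - u < \<delta>" for \<delta> \<epsilon> u v
    using last_before_jump[OF assms(2,3) that(3-5)]
  proof cases
    case (2 w)
    then show ?thesis using that last_before_greatest[OF assms(2) T, of v]
      by (auto intro!: \<delta> simp: dist_real_def dist_commute)
  qed (use \<open>\<epsilon> > 0\<close> in simp)
  show ?thesis
    unfolding continuous_on_iff
  proof (intro ballI allI impI)
    fix x \<epsilon> :: real assume "x \<in> {0..1}" "\<epsilon> > 0"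
    then obtain \<delta> where "\<delta> > 0"
      and \<delta>: "\<And>s t. s \<in> {0..1} \<Longrightarrow> t \<in> {0..1} \<Longrightarrow> dist s t < \<delta> \<Longrightarrow> dist (p s) (p t) < \<epsilon>"
      using compact_uniformly_continuous[OF _ compact_Icc] \<open>path p\<close>
      unfolding path_def uniformly_continuous_on_def by metis
    show "\<exists>\<delta>>0. \<forall>y\<in>{0..1}. dist y x < \<delta> \<longrightarrow> dist ((p \<circ> last_before T) y) ((p \<circ> last_before T) x) < \<epsilon>"
    proof (intro exI[of _ \<delta>] conjI ballI impI)
      fix y assume "y \<in> {0..1}" "dist y x < \<delta>"
      then show "dist ((p \<circ> last_before T) y) ((p \<circ> last_before T) x) < \<epsilon>"
        using close[of \<delta> \<epsilon> x y, OF \<delta>] close[of \<delta> \<epsilon> y x, OF \<delta>] \<open>x \<in> {0..1}\<close> \<open>\<epsilon> > 0\<close>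
        by (cases "x \<le> y") (auto simp: dist_real_def dist_commute)
    qed (fact \<open>\<delta> > 0\<close>)
  qed
qed

text \<open>If \<open>p \<circ> last_before T\<close> took the same value at \<open>u \<le> v\<close> but a different one in between,
  the points of \<open>T\<close> strictly between \<open>last_before T u\<close> and \<open>last_before T v\<close> could be
  removed from \<open>T\<close>, contradicting minimality.\<close>
lemma minimal_loop_cut_fibres:
  fixes p :: "real \<Rightarrow> 'a"
  assumes "closed T" "cuts_loops p T"
    and minimal: "\<And>U. closed U \<Longrightarrow> cuts_loops p U \<Longrightarrow> U \<subseteq> T \<Longrightarrow> U = T"
    and "0 \<le> u" "u \<le> x" "x \<le> v" "v \<le> 1" and eq: "p (last_before T u) = p (last_before T v)"
  shows "p (last_before T x) = p (last_before T u)"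
proof -
  have T: "0 \<in> T" "1 \<in> T" "T \<subseteq> {0..1}" and gap: "\<And>x y. x \<in> T \<Longrightarrow> y \<in> T \<Longrightarrow> x < y \<Longrightarrow>
    {x<..<y} \<inter> T = {} \<Longrightarrow> p x = p y"
    using assms(2) by (auto simp: cuts_loops_def)
  note \<sigma> = last_before_greatest[OF assms(1) T(1,3)]
  define a where "a = last_before T u"
  define b where "b = last_before T v"
  have ab: "a \<in> T" "b \<in> T" "0 \<le> a" "a \<le> b" "b \<le> 1"
    using \<sigma>[of u] \<sigma>[of v] mono_on_last_before[OF assms(1) T(1,3)] T(3) assms(4-7)
    by (auto simp: a_def b_def mono_on_def)
  have "cuts_loops p (T - {a<..<b})"
    unfolding cuts_loops_def
  proof (intro conjI ballI impI)
    fix s t assume s: "s \<in> T - {a<..<b}" and t: "t \<in> T - {a<..<b}" and "s < t"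
      and no_pts: "{s<..<t} \<inter> (T - {a<..<b}) = {}"
    show "p s = p t"
    proof (cases "{s<..<t} \<inter> {a<..<b} = {}")
      case True
      then show ?thesis using gap[of s t] s t \<open>s < t\<close> no_pts by blast
    next
      case False
      then obtain r where "r \<in> {s<..<t}" "r \<in> {a<..<b}" by blast
      then have "s < r" "r < t" "a < r" "r < b" by auto
      then have "s \<le> a" "b \<le> t" using s t by auto
      moreover have "a \<notin> {s<..<t}" "b \<notin> {s<..<t}" using no_pts ab by auto
      ultimately have "s = a" "t = b" using \<open>a < r\<close> \<open>r < t\<close> \<open>s < r\<close> \<open>r < b\<close> by auto
      then show ?thesis using eq by (simp add: a_def b_def)
    qed
  qed (use T ab in auto)
  then have "T - {a<..<b} = T" using minimal assms(1) by (simp add: closed_Diff)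
  moreover have "last_before T x \<in> T" "a \<le> last_before T x" "last_before T x \<le> b"
    using \<sigma>[of x] mono_on_last_before[OF assms(1) T(1,3)] assms(4-7)
    by (auto simp: a_def b_def mono_on_def)
  ultimately have "last_before T x = a \<or> last_before T x = b" by force
  then show ?thesis using eq by (auto simp: a_def b_def)
qed

text \<open>The image of \<open>h\<close> is an arc; reparametrised so that it starts at \<open>h 0\<close>, \<open>h\<close> becomes a
  continuous reparametrisation \<open>F\<close> of that arc.\<close>
lemma factors_through_arc:
  fixes h :: "real \<Rightarrow> 'a::euclidean_space"
  assumes conth: "continuous_on {0..1} h" and "\<And>y. connected ({0..1} \<inter> h -` {y})" "h 1 \<noteq> h 0"
  obtains G :: "real \<Rightarrow> 'a" and F :: "real \<Rightarrow> real"
  where "arc G" "continuous_on {0..1} F" "F 0 = 0" "F 1 = 1" "\<And>x. x \<in> {0..1} \<Longrightarrow> G (F x) = h x"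
proof -
  obtain f :: "'a \<Rightarrow> real" and g :: "real \<Rightarrow> 'a"
    where fg: "homeomorphism (h ` {0..1}) {0..1} f g"
    using homeomorphic_monotone_image_interval[OF assms] by (auto simp: homeomorphic_def)
  then have "continuous_on {0..1} g" "\<And>y. y \<in> {0..1} \<Longrightarrow> f (g y) = y"
    by (auto simp: homeomorphism_def)
  then have "arc g" unfolding arc_def path_def by (metis inj_onI)
  define F0 where "F0 = f \<circ> h"
  have F0: "F0 x \<in> {0..1}" "g (F0 x) = h x" if "x \<in> {0..1}" for x
    using fg that unfolding homeomorphism_def F0_def by auto
  have "continuous_on {0..1} F0"
    unfolding F0_def using fg conth
    by (intro continuous_on_compose) (auto simp: homeomorphism_def)
  have "F0 0 \<noteq> F0 1" using F0[of 0] F0[of 1] \<open>h 1 \<noteq> h 0\<close> by auto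
  show ?thesis
  proof
    show "arc (subpath (F0 0) (F0 1) g)"
      using arc_subpath_arc[OF \<open>arc g\<close>] F0 \<open>F0 0 \<noteq> F0 1\<close> by simp
    show "continuous_on {0..1} (\<lambda>x. (F0 x - F0 0) / (F0 1 - F0 0))"
      using \<open>F0 0 \<noteq> F0 1\<close> by (intro continuous_intros \<open>continuous_on {0..1} F0\<close>) auto
    fix x :: real assume "x \<in> {0..1}"
    then show "subpath (F0 0) (F0 1) g ((F0 x - F0 0) / (F0 1 - F0 0)) = h x"
      using F0 \<open>F0 0 \<noteq> F0 1\<close> by (simp add: subpath_def)
  qed (use \<open>F0 0 \<noteq> F0 1\<close> in simp_all)
qed

lemma path_factors_through_arc:
  fixes p :: "real \<Rightarrow> 'a::euclidean_space"
  assumes "path p" "pathstart p \<noteq> pathfinish p"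
  obtains G :: "real \<Rightarrow> 'a" and F \<sigma> :: "real \<Rightarrow> real"
  where "arc G" "continuous_on {0..1} F" "F 0 = 0" "F 1 = 1"
    "mono_on {0..1} \<sigma>" "\<sigma> 0 = 0" "\<sigma> 1 = 1" "\<And>x. x \<in> {0..1} \<Longrightarrow> G (F x) = p (\<sigma> x)"
proof -
  obtain T where "closed T" "cuts_loops p T"
    and minimal: "\<And>U. closed U \<Longrightarrow> cuts_loops p U \<Longrightarrow> U \<subseteq> T \<Longrightarrow> U = T"
    using exists_minimal_loop_cut[OF assms(1)] by blast
  then have T: "0 \<in> T" "1 \<in> T" "T \<subseteq> {0..1}" by (auto simp: cuts_loops_def)
  define \<sigma> where "\<sigma> = last_before T"
  note \<sigma> = last_before_greatest[OF \<open>closed T\<close> T(1,3)]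
  have \<sigma>01: "\<sigma> 0 = 0" "\<sigma> 1 = 1"
    using \<sigma>(2)[OF order_refl] \<sigma>(3)[OF order_refl T(1) order_refl]
      \<sigma>(2)[OF zero_le_one] \<sigma>(3)[OF zero_le_one T(2) order_refl]
    unfolding \<sigma>_def by linarith+
  obtain G :: "real \<Rightarrow> 'a" and F :: "real \<Rightarrow> real"
    where "arc G" "continuous_on {0..1} F" "F 0 = 0" "F 1 = 1"
      "\<And>x. x \<in> {0..1} \<Longrightarrow> G (F x) = (p \<circ> \<sigma>) x"
  proof (rule factors_through_arc)
    show "continuous_on {0..1} (p \<circ> \<sigma>)"
      unfolding \<sigma>_def by (rule continuous_on_last_before) fact+
    show "connected ({0..1} \<inter> (p \<circ> \<sigma>) -` {y})" for y
      unfolding is_interval_connected_1[symmetric] is_interval_1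
    proof (intro ballI allI impI)
      fix a b x assume "a \<in> {0..1} \<inter> (p \<circ> \<sigma>) -` {y}" "b \<in> {0..1} \<inter> (p \<circ> \<sigma>) -` {y}" "a \<le> x \<and> x \<le> b"
      then show "x \<in> {0..1} \<inter> (p \<circ> \<sigma>) -` {y}"
        using minimal_loop_cut_fibres[OF \<open>closed T\<close> \<open>cuts_loops p T\<close> minimal, of a x b]
        by (auto simp: \<sigma>_def)
    qed
    show "(p \<circ> \<sigma>) 1 \<noteq> (p \<circ> \<sigma>) 0" using assms(2) \<sigma>01 by (simp add: pathstart_def pathfinish_def)
  qed blast
  moreover have "mono_on {0..1} \<sigma>" unfolding \<sigma>_def by (rule mono_on_last_before) fact+
  ultimately show ?thesis using that \<sigma>01 by simp
qed

lemma curve_length_le_if_variation_le: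
  "variation g a b \<le> ereal c \<Longrightarrow> curve_length g a b \<le> c"
  using variation_nonneg[of g a b] by (cases "variation g a b") (auto simp: curve_length_def)

text \<open>Lengths along \<open>G = p \<circ> \<sigma> \<circ> F\<^sup>-\<^sup>1\<close> are bounded by lengths along \<open>p\<close>: the continuous
  reparametrisation \<open>F\<close> cannot shorten, and collapsing loops via the monotone \<open>\<sigma>\<close> cannot
  lengthen.\<close>
lemma path_contains_arc_with_lengths:
  fixes p :: "real \<Rightarrow> 'a::euclidean_space"
  assumes "path p" "pathstart p \<noteq> pathfinish p" and fin: "variation p 0 1 \<noteq> \<infinity>"
  obtains G where "arc G" "pathstart G = pathstart p" "pathfinish G = pathfinish p"
    "variation G 0 1 \<noteq> \<infinity>"
    "\<And>r. r \<in> {0..1} \<Longrightarrow> \<exists>\<tau>\<in>{0..1}. G r = p \<tau> \<and>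
       curve_length G 0 r \<le> curve_length p 0 \<tau> \<and> curve_length G r 1 \<le> curve_length p \<tau> 1"
proof -
  obtain G :: "real \<Rightarrow> 'a" and F \<sigma> :: "real \<Rightarrow> real"
    where G: "arc G" "continuous_on {0..1} F" "F 0 = 0" "F 1 = 1"
      "mono_on {0..1} \<sigma>" "\<sigma> 0 = 0" "\<sigma> 1 = 1" "\<And>x. x \<in> {0..1} \<Longrightarrow> G (F x) = p (\<sigma> x)"
    using path_factors_through_arc[OF assms(1,2)] by blast
  have lengths: "\<exists>\<tau>\<in>{0..1}. G r = p \<tau> \<and>
      variation G 0 r \<le> variation p 0 \<tau> \<and> variation G r 1 \<le> variation p \<tau> 1"
    if r: "r \<in> {0..1}" for r
  proof -
    obtain x where x: "x \<in> {0..1}" "F x = r"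
      using IVT'[of F 0 r 1] G(2-4) r by auto
    have cont: "continuous_on {0..x} F" "continuous_on {x..1} F"
      using G(2) x(1) by (auto intro: continuous_on_subset)
    have mono: "mono_on {0..x} \<sigma>" "mono_on {x..1} \<sigma>"
      using G(5) x(1) by (auto intro: mono_on_subset)
    have \<sigma>x: "\<sigma> x \<in> {0..1}"
      using mono_onD[OF G(5), of 0 x] mono_onD[OF G(5), of x 1] G(6,7) x(1) by simp
    have "variation G 0 r = variation G (F 0) (F x)" using G(3) x(2) by simp
    also have "\<dots> \<le> variation (G \<circ> F) 0 x"
      using cont(1) x r G(3) by (intro le_variation_comp) auto
    also have "\<dots> = variation (p \<circ> \<sigma>) 0 x" using G(8) x(1) by (intro variation_cong) simp
    also have "\<dots> \<le> variation p (\<sigma> 0) (\<sigma> x)" using mono(1) x(1) by (intro variation_comp_le) simp_all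
    finally have left: "variation G 0 r \<le> variation p 0 (\<sigma> x)" using G(6) by simp
    have "variation G r 1 = variation G (F x) (F 1)" using G(4) x(2) by simp
    also have "\<dots> \<le> variation (G \<circ> F) x 1"
      using cont(2) x r G(4) by (intro le_variation_comp) auto
    also have "\<dots> = variation (p \<circ> \<sigma>) x 1" using G(8) x(1) by (intro variation_cong) simp
    also have "\<dots> \<le> variation p (\<sigma> x) (\<sigma> 1)" using mono(2) x(1) by (intro variation_comp_le) simp_all
    finally have right: "variation G r 1 \<le> variation p (\<sigma> x) 1" using G(7) by simp
    show ?thesis using left right \<sigma>x G(8)[OF x(1)] x(2) by blast
  qed
  show ?thesis
  proof
    show "arc G" by (fact G(1))
    show "pathstart G = pathstart p" "pathfinish G = pathfinish p"
      using G(3,4,6,7) G(8)[of 0] G(8)[of 1] by (simp_all add: pathstart_def pathfinish_def)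
    obtain \<tau> where "\<tau> \<in> {0..1}" "variation G 0 1 \<le> variation p 0 \<tau>" using lengths[of 1] by auto
    then show "variation G 0 1 \<noteq> \<infinity>"
      using variation_eq_curve_length[OF fin, of 0 \<tau>] by auto
    fix r :: real assume "r \<in> {0..1}"
    then obtain \<tau> where \<tau>: "\<tau> \<in> {0..1}" "G r = p \<tau>"
      "variation G 0 r \<le> variation p 0 \<tau>" "variation G r 1 \<le> variation p \<tau> 1"
      using lengths by blast
    then show "\<exists>\<tau>\<in>{0..1}. G r = p \<tau> \<and>
       curve_length G 0 r \<le> curve_length p 0 \<tau> \<and> curve_length G r 1 \<le> curve_length p \<tau> 1"
      using variation_eq_curve_length[OF fin, of 0 \<tau>] variation_eq_curve_length[OF fin, of \<tau> 1]
      by (intro bexI[of _ \<tau>]) (auto intro!: curve_length_le_if_variation_le)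
  qed
qed

section \<open>The function \<open>\<psi>\<close> and distance to the boundary\<close>

lemma phi_cond_facts:
  assumes "phi_cond \<phi>"
  shows "\<phi> 0 = 0" "\<And>s t. 0 \<le> s \<Longrightarrow> s < t \<Longrightarrow> \<phi> s < \<phi> t" "\<phi> 1 > 0"
proof -
  show "\<phi> 0 = 0" and strict: "\<And>s t. 0 \<le> s \<Longrightarrow> s < t \<Longrightarrow> \<phi> s < \<phi> t"
    using assms unfolding phi_cond_def strict_mono_on_def by auto
  show "\<phi> 1 > 0" using strict[of 0 1] \<open>\<phi> 0 = 0\<close> by simp
qed

lemma psi_0: "phi_cond \<phi> \<Longrightarrow> psi \<phi> 0 = 0"
  by (simp add: psi_def phi_cond_facts)

lemma psi_linear: "1 \<le> t \<Longrightarrow> psi \<phi> t = \<phi> 1 * t"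
  by (simp add: psi_def)

lemma psi_strict_mono:
  assumes "phi_cond \<phi>" "0 \<le> s" "s < t"
  shows "psi \<phi> s < psi \<phi> t"
proof -
  note \<phi> = phi_cond_facts[OF assms(1)]
  consider "t \<le> 1" | "s \<le> 1" "1 < t" | "1 < s" by linarith
  then show ?thesis
  proof cases
    case 2
    have "\<phi> s \<le> \<phi> 1" using \<phi>(2)[of s 1] 2 assms by (cases "s = 1") auto
    also have "\<phi> 1 < \<phi> 1 * t" using 2 \<phi>(3) by simp
    finally show ?thesis using 2 by (simp add: psi_def)
  qed (use assms \<phi> in \<open>auto simp: psi_def\<close>)
qed

lemma psi_mono:
  assumes "phi_cond \<phi>" "0 \<le> s" "s \<le> t"
  shows "psi \<phi> s \<le> psi \<phi> t"
  using psi_strict_mono[OF assms(1,2), of t] assms by (cases "s = t") auto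

lemma psi_pos: "phi_cond \<phi> \<Longrightarrow> 0 < t \<Longrightarrow> 0 < psi \<phi> t"
  using psi_strict_mono[of \<phi> 0 t] psi_0 by simp

lemma psi_nonneg: "phi_cond \<phi> \<Longrightarrow> 0 \<le> t \<Longrightarrow> 0 \<le> psi \<phi> t"
  using psi_mono[of \<phi> 0 t] psi_0 by simp

lemma le_infdist_frontier_if_ball_subset:
  fixes D :: "'a::real_normed_vector set"
  assumes "open D" "ball c r \<subseteq> D" "frontier D \<noteq> {}"
  shows "r \<le> infdist c (frontier D)"
proof -
  have "r \<le> dist c z" if "z \<in> frontier D" for z
    using that assms(1,2) by (force simp: frontier_def interior_open)
  then show ?thesis unfolding infdist_def using assms(3) by (auto intro!: cINF_greatest)
qed

lemma ball_subset_if_le_infdist_frontier: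
  fixes D :: "'a::euclidean_space set"
  assumes "c \<in> D" "r \<le> infdist c (frontier D)"
  shows "ball c r \<subseteq> D"
proof
  fix z assume z: "z \<in> ball c r"
  show "z \<in> D"
  proof (rule ccontr)
    assume "z \<notin> D"
    then have "closed_segment c z \<inter> frontier D \<noteq> {}"
      using assms(1) by (intro connected_Int_frontier) auto
    then obtain w where w: "w \<in> closed_segment c z" "w \<in> frontier D" by blast
    have "dist c w \<le> dist c z" using dist_in_closed_segment[OF w(1)] by (simp add: dist_commute)
    also have "\<dots> < r" using z by simp
    also have "\<dots> \<le> dist c w" using assms(2) infdist_le[OF w(2), of c] by linarith
    finally show False by simp
  qed
qed

lemma diameter_ge_ball:
  fixes D :: "'a::euclidean_space set"
  assumes "ball c r \<subseteq> D" "bounded D" "r > 0"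
  shows "2 * r \<le> diameter D"
  using diameter_subset[OF assms(1,2)] diameter_ball[of c r] assms(3) by simp

lemma diameter_pos:
  fixes D :: "'a::euclidean_space set"
  assumes "open D" "D \<noteq> {}" "bounded D"
  shows "diameter D > 0"
proof -
  obtain c r where "r > 0" "ball c r \<subseteq> D" using assms(1,2) open_contains_ball by blast
  then show ?thesis using diameter_ge_ball[of c r D] assms by simp
qed

lemma exists_far_point:
  fixes D :: "'a::euclidean_space set"
  assumes "a \<in> D" "R < diameter D / 2"
  obtains b where "b \<in> D" "R < dist a b"
proof (rule ccontr)
  assume "\<not> thesis"
  with that have near: "dist a b \<le> R" if "b \<in> D" for b using \<open>b \<in> D\<close> by (meson not_le)
  then have "norm (x - y) \<le> 2 * R" if "x \<in> D" "y \<in> D" for x y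
  proof -
    have "dist x y \<le> dist a x + dist a y" using dist_triangle2[of x y a] by (simp add: dist_commute)
    then show ?thesis using near that by (smt (verit) dist_norm)
  qed
  then have "diameter D \<le> 2 * R" using assms(1) by (intro diameter_le) auto
  then show False using assms(2) by simp
qed

lemma exists_far_pair:
  fixes D :: "'a::euclidean_space set"
  assumes "D \<noteq> {}" "R < diameter D"
  obtains a b where "a \<in> D" "b \<in> D" "R < dist a b"
proof (rule ccontr)
  assume "\<not> thesis"
  with that have "norm (x - y) \<le> R" if "x \<in> D" "y \<in> D" for x y
    using \<open>x \<in> D\<close> \<open>y \<in> D\<close> by (force simp: dist_norm not_less)
  then have "diameter D \<le> R" using assms(1) by (intro diameter_le) auto
  then show False using assms(2) by simp
qed

section \<open>From \<open>\<psi>\<close>-John domains to cigar John domains\<close>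

definition carrot :: "(real \<Rightarrow> real) \<Rightarrow> 'a::euclidean_space set \<Rightarrow> real \<Rightarrow> (real \<Rightarrow> 'a) \<Rightarrow> real \<Rightarrow> bool"
  where "carrot \<phi> D c \<gamma> L \<longleftrightarrow> 0 \<le> L \<and> continuous_on {0..L} \<gamma> \<and> \<gamma> ` {0..L} \<subseteq> D \<and>
     arclength_parametrized \<gamma> L \<and> (\<forall>t\<in>{0..L}. psi \<phi> t \<le> c * infdist (\<gamma> t) (frontier D))"

text \<open>Near its end a John curve stays at distance \<open>d0/2\<close> from the boundary; elsewhere the
  factor \<open>\<alpha> / L\<close> is at most \<open>2 \<alpha> / d0\<close>.\<close>
lemma John_curve_is_carrot:
  fixes D :: "'a::euclidean_space set"
  assumes phi: "phi_cond \<phi>" and "0 < d0" "d0 \<le> infdist (\<gamma> L) (frontier D)" "0 < \<alpha>"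
    and "0 \<le> L" "L \<le> \<beta>" "continuous_on {0..L} \<gamma>" "\<gamma> ` {0..L} \<subseteq> D"
    and arc: "arclength_parametrized \<gamma> L"
    and John: "\<forall>t\<in>{0..L}. psi \<phi> t \<le> \<alpha> / L * infdist (\<gamma> t) (frontier D)"
  shows "carrot \<phi> D (2 * (\<alpha> + psi \<phi> \<beta>) / d0) \<gamma> L"
  unfolding carrot_def
proof (intro conjI ballI assms)
  define c where "c = 2 * (\<alpha> + psi \<phi> \<beta>) / d0"
  fix \<tau> assume \<tau>: "\<tau> \<in> {0..L}"
  have I0: "0 \<le> infdist (\<gamma> \<tau>) (frontier D)" by (rule infdist_nonneg)
  have p\<beta>: "0 \<le> psi \<phi> \<beta>" using psi_nonneg[OF phi] assms by simp
  show "psi \<phi> \<tau> \<le> c * infdist (\<gamma> \<tau>) (frontier D)"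
  proof (cases "d0 / 2 \<le> L")
    case True
    have "\<alpha> / L \<le> \<alpha> / (d0 / 2)" using True assms by (intro divide_left_mono) auto
    also have "\<dots> \<le> c" unfolding c_def using p\<beta> assms by (simp add: field_simps)
    finally have "\<alpha> / L \<le> c" .
    then show ?thesis using John \<tau> I0 by (meson mult_right_mono order_trans)
  next
    case False
    have "dist (\<gamma> \<tau>) (\<gamma> L) \<le> L - \<tau>" using dist_le_arclength[OF arc] \<tau> by auto
    moreover have "infdist (\<gamma> L) (frontier D) \<le> infdist (\<gamma> \<tau>) (frontier D) + dist (\<gamma> L) (\<gamma> \<tau>)"
      by (rule infdist_triangle)
    ultimately have I: "d0 / 2 \<le> infdist (\<gamma> \<tau>) (frontier D)"
      using assms False \<tau> by (simp add: dist_commute)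
    have "psi \<phi> \<tau> \<le> psi \<phi> \<beta>" using \<tau> assms by (intro psi_mono[OF phi]) auto
    also have "\<dots> \<le> c * (d0 / 2)" unfolding c_def using assms by (simp add: field_simps)
    also have "\<dots> \<le> c * infdist (\<gamma> \<tau>) (frontier D)"
      using I unfolding c_def using assms p\<beta> by (intro mult_left_mono) auto
    finally show ?thesis .
  qed
qed

lemma psi_John_carrots:
  fixes D :: "'a::euclidean_space set"
  assumes phi: "phi_cond \<phi>" and "open D" "D \<noteq> {}" and J: "psi_John (psi \<phi>) D \<alpha> \<beta>"
  obtains x0 c where "x0 \<in> D" "c > 0" "\<And>x. x \<in> D \<Longrightarrow> \<exists>\<gamma> L. carrot \<phi> D c \<gamma> L \<and> \<gamma> 0 = x \<and> \<gamma> L = x0"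
proof -
  have "bounded D" "0 < \<alpha>" "0 < \<beta>" using J by (simp_all add: psi_John_def)
  have "\<exists>x0\<in>D. \<forall>x\<in>D. \<exists>(\<gamma>::real \<Rightarrow> 'a) L.
        0 \<le> L \<and> L \<le> \<beta> \<and> continuous_on {0..L} \<gamma> \<and> \<gamma> ` {0..L} \<subseteq> D \<and> \<gamma> 0 = x \<and> \<gamma> L = x0 \<and>
        arclength_parametrized \<gamma> L \<and> (\<forall>t\<in>{0..L}. psi \<phi> t \<le> \<alpha> / L * infdist (\<gamma> t) (frontier D))"
    using J by (simp add: psi_John_def arclength_parametrized_def)
  then obtain x0 where x0: "x0 \<in> D" and curves: "\<And>x. x \<in> D \<Longrightarrow> \<exists>(\<gamma>::real \<Rightarrow> 'a) L.
        0 \<le> L \<and> L \<le> \<beta> \<and> continuous_on {0..L} \<gamma> \<and> \<gamma> ` {0..L} \<subseteq> D \<and> \<gamma> 0 = x \<and> \<gamma> L = x0 \<and>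
        arclength_parametrized \<gamma> L \<and> (\<forall>t\<in>{0..L}. psi \<phi> t \<le> \<alpha> / L * infdist (\<gamma> t) (frontier D))"
    by blast
  have "frontier D \<noteq> {}" using frontier_not_empty \<open>D \<noteq> {}\<close> \<open>bounded D\<close> not_bounded_UNIV by metis
  obtain r where "0 < r" "ball x0 r \<subseteq> D" using \<open>open D\<close> x0 open_contains_ball by blast
  then have d0: "0 < infdist x0 (frontier D)"
    using le_infdist_frontier_if_ball_subset[OF \<open>open D\<close> _ \<open>frontier D \<noteq> {}\<close>] by fastforce
  define c where "c = 2 * (\<alpha> + psi \<phi> \<beta>) / infdist x0 (frontier D)"
  show ?thesis
  proof
    show "x0 \<in> D" by fact
    show "0 < c" unfolding c_def using \<open>0 < \<alpha>\<close> \<open>0 < \<beta>\<close> d0 psi_nonneg[OF phi, of \<beta>] by simp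
    fix x assume "x \<in> D"
    from curves[OF this] obtain \<gamma> L where "0 \<le> L" "L \<le> \<beta>" "continuous_on {0..L} \<gamma>" "\<gamma> ` {0..L} \<subseteq> D"
      "\<gamma> 0 = x" "\<gamma> L = x0" "arclength_parametrized \<gamma> L"
      "\<forall>t\<in>{0..L}. psi \<phi> t \<le> \<alpha> / L * infdist (\<gamma> t) (frontier D)"
      by blast
    moreover from this have "carrot \<phi> D c \<gamma> L"
      unfolding c_def by (intro John_curve_is_carrot[OF phi d0]) (simp_all add: \<open>0 < \<alpha>\<close>)
    ultimately show "\<exists>\<gamma> L. carrot \<phi> D c \<gamma> L \<and> \<gamma> 0 = x \<and> \<gamma> L = x0" by blast
  qed
qed

lemma variation_affine_reparam:
  assumes "arclength_parametrized \<gamma> L" "0 \<le> c" "s \<le> t" "0 \<le> c * s + d" "c * t + d \<le> L"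
  shows "variation (\<lambda>x. \<gamma> (c * x + d)) s t = ereal (c * t - c * s)"
proof -
  have "c * s + d \<le> c * t + d" using assms by (simp add: mult_left_mono)
  have "variation (\<gamma> \<circ> (\<lambda>x. c * x + d)) s t = variation \<gamma> (c * s + d) (c * t + d)"
    using assms by (intro variation_comp_mono continuous_intros) (auto simp: mono_on_def mult_left_mono)
  also have "\<dots> = ereal (c * t - c * s)"
    using assms \<open>c * s + d \<le> c * t + d\<close> by (simp add: arclength_parametrized_def)
  finally show ?thesis by (simp add: comp_def)
qed

lemma carrot_join_halves:
  fixes D :: "'a::euclidean_space set"
  assumes a: "carrot \<phi> D c \<gamma>a La" and b: "carrot \<phi> D c \<gamma>b Lb" and meet: "\<gamma>a La = \<gamma>b Lb"
  defines "p \<equiv> (\<lambda>t. \<gamma>a (La * t)) +++ reversepath (\<lambda>t. \<gamma>b (Lb * t))"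
  shows "\<And>\<tau>. \<tau> \<in> {0..1/2} \<Longrightarrow>
      p \<tau> = \<gamma>a (2 * La * \<tau>) \<and> 2 * La * \<tau> \<in> {0..La} \<and> variation p 0 \<tau> = ereal (2 * La * \<tau>)"
    "\<And>\<tau>. \<tau> \<in> {1/2..1} \<Longrightarrow>
      p \<tau> = \<gamma>b (2 * Lb * (1 - \<tau>)) \<and> 2 * Lb * (1 - \<tau>) \<in> {0..Lb} \<and>
      variation p \<tau> 1 = ereal (2 * Lb * (1 - \<tau>))"
proof -
  have ca: "0 \<le> La" "arclength_parametrized \<gamma>a La"
    and cb: "0 \<le> Lb" "arclength_parametrized \<gamma>b Lb"
    using a b by (auto simp: carrot_def)
  have scaled: "L * t \<in> {0..L}" if "0 \<le> L" "t \<in> {0..1}" for L t :: real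
    using that by (auto simp: mult_left_le)
  have left: "p \<tau> = \<gamma>a (2 * La * \<tau>)" "2 * La * \<tau> \<in> {0..La}" if "\<tau> \<in> {0..1/2}" for \<tau>
    using that scaled[OF ca(1), of "2 * \<tau>"] by (auto simp: p_def joinpaths_def algebra_simps)
  have right: "p \<tau> = \<gamma>b (2 * Lb * (1 - \<tau>))" "2 * Lb * (1 - \<tau>) \<in> {0..Lb}" if "\<tau> \<in> {1/2..1}" for \<tau>
    using that meet scaled[OF cb(1), of "2 - 2 * \<tau>"]
    by (auto simp: p_def joinpaths_def reversepath_def algebra_simps)
  show "p \<tau> = \<gamma>a (2 * La * \<tau>) \<and> 2 * La * \<tau> \<in> {0..La} \<and> variation p 0 \<tau> = ereal (2 * La * \<tau>)"
    if \<tau>: "\<tau> \<in> {0..1/2}" for \<tau>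
  proof -
    have "variation p 0 \<tau> = variation (\<lambda>x. \<gamma>a (2 * La * x + 0)) 0 \<tau>"
      using \<tau> left by (intro variation_cong) auto
    also have "\<dots> = ereal (2 * La * \<tau>)"
      using \<tau> left(2)[OF \<tau>] ca by (subst variation_affine_reparam) auto
    finally show ?thesis using left[OF \<tau>] by simp
  qed
  show "p \<tau> = \<gamma>b (2 * Lb * (1 - \<tau>)) \<and> 2 * Lb * (1 - \<tau>) \<in> {0..Lb} \<and>
      variation p \<tau> 1 = ereal (2 * Lb * (1 - \<tau>))" if \<tau>: "\<tau> \<in> {1/2..1}" for \<tau>
  proof -
    have "variation p \<tau> 1 = variation (\<lambda>x. p (- x)) (- 1) (- \<tau>)" by (simp add: variation_reflect)
    also have "\<dots> = variation (\<lambda>x. \<gamma>b (2 * Lb * x + 2 * Lb)) (- 1) (- \<tau>)"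
      using \<tau> right by (intro variation_cong) (auto simp: algebra_simps)
    also have "\<dots> = ereal (2 * Lb * (1 - \<tau>))"
      using \<tau> right(2)[OF \<tau>] cb by (subst variation_affine_reparam) (auto simp: algebra_simps)
    finally show ?thesis using right[OF \<tau>] by simp
  qed
qed

lemma carrot_join:
  fixes D :: "'a::euclidean_space set"
  assumes phi: "phi_cond \<phi>" and a: "carrot \<phi> D c \<gamma>a La" and b: "carrot \<phi> D c \<gamma>b Lb"
    and meet: "\<gamma>a La = \<gamma>b Lb"
  defines "p \<equiv> (\<lambda>t. \<gamma>a (La * t)) +++ reversepath (\<lambda>t. \<gamma>b (Lb * t))"
  shows "path p" "pathstart p = \<gamma>a 0" "pathfinish p = \<gamma>b 0" "p ` {0..1} \<subseteq> D"
    "variation p 0 1 \<noteq> \<infinity>"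
    "\<And>\<tau>. \<tau> \<in> {0..1} \<Longrightarrow>
       psi \<phi> (min (curve_length p 0 \<tau>) (curve_length p \<tau> 1)) \<le> c * infdist (p \<tau>) (frontier D)"
proof -
  have ca: "0 \<le> La" "continuous_on {0..La} \<gamma>a" "\<gamma>a ` {0..La} \<subseteq> D"
      "\<And>t. t \<in> {0..La} \<Longrightarrow> psi \<phi> t \<le> c * infdist (\<gamma>a t) (frontier D)"
    and cb: "0 \<le> Lb" "continuous_on {0..Lb} \<gamma>b" "\<gamma>b ` {0..Lb} \<subseteq> D"
      "\<And>t. t \<in> {0..Lb} \<Longrightarrow> psi \<phi> t \<le> c * infdist (\<gamma>b t) (frontier D)"
    using a b by (auto simp: carrot_def)
  note left = carrot_join_halves(1)[OF a b meet, folded p_def]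
  note right = carrot_join_halves(2)[OF a b meet, folded p_def]
  show "path p" unfolding p_def using ca(1,2) cb(1,2) meet
    by (intro path_join_imp)
      (auto simp: path_def pathfinish_def pathstart_def reversepath_def mult_left_le
        intro!: continuous_on_compose2[OF ca(2)] continuous_on_compose2[OF cb(2)] continuous_intros)
  show "pathstart p = \<gamma>a 0" "pathfinish p = \<gamma>b 0"
    by (simp_all add: p_def pathstart_def pathfinish_def joinpaths_def reversepath_def)
  show "p ` {0..1} \<subseteq> D"
  proof
    fix y assume "y \<in> p ` {0..1}"
    then obtain \<tau> where "\<tau> \<in> {0..1}" "y = p \<tau>" by auto
    then show "y \<in> D" using left[of \<tau>] right[of \<tau>] ca(3) cb(3) by (cases "\<tau> \<le> 1/2") auto
  qed
  show "variation p 0 1 \<noteq> \<infinity>"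
    using variation_add[of 0 "1/2" 1 p] left[of "1/2"] right[of "1/2"] by simp
  fix \<tau> :: real assume \<tau>: "\<tau> \<in> {0..1}"
  have m0: "0 \<le> min (curve_length p 0 \<tau>) (curve_length p \<tau> 1)" by (simp add: curve_length_nonneg)
  show "psi \<phi> (min (curve_length p 0 \<tau>) (curve_length p \<tau> 1)) \<le> c * infdist (p \<tau>) (frontier D)"
  proof (cases "\<tau> \<le> 1/2")
    case True
    then have "min (curve_length p 0 \<tau>) (curve_length p \<tau> 1) \<le> 2 * La * \<tau>"
      using left[of \<tau>] \<tau> by (simp add: curve_length_def)
    then show ?thesis using psi_mono[OF phi m0] ca(4) left[of \<tau>] \<tau> True by fastforce
  next
    case False
    then have "min (curve_length p 0 \<tau>) (curve_length p \<tau> 1) \<le> 2 * Lb * (1 - \<tau>)"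
      using right[of \<tau>] \<tau> by (simp add: curve_length_def)
    then show ?thesis using psi_mono[OF phi m0] cb(4) right[of \<tau>] \<tau> False by fastforce
  qed
qed

lemma cigar_arc_of_carrots:
  fixes D :: "'a::euclidean_space set"
  assumes phi: "phi_cond \<phi>" and "c > 0"
    and a: "carrot \<phi> D c \<gamma>a La" and b: "carrot \<phi> D c \<gamma>b Lb" and "\<gamma>a La = \<gamma>b Lb"
    and "\<gamma>a 0 \<noteq> \<gamma>b 0"
  obtains g where "arc g" "pathstart g = \<gamma>a 0" "pathfinish g = \<gamma>b 0" "path_image g \<subseteq> D"
    "variation g 0 1 < \<infinity>"
    "\<And>t. t \<in> {0<..<1} \<Longrightarrow> ball (g t) (psi \<phi> (min (curve_length g 0 t) (curve_length g t 1)) / c) \<subseteq> D"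
proof -
  define p where "p = (\<lambda>t. \<gamma>a (La * t)) +++ reversepath (\<lambda>t. \<gamma>b (Lb * t))"
  note p = carrot_join[OF phi a b \<open>\<gamma>a La = \<gamma>b Lb\<close>, folded p_def]
  have "pathstart p \<noteq> pathfinish p" using p(2,3) \<open>\<gamma>a 0 \<noteq> \<gamma>b 0\<close> by simp
  then obtain G where G: "arc G" "pathstart G = \<gamma>a 0" "pathfinish G = \<gamma>b 0" "variation G 0 1 \<noteq> \<infinity>"
    and through_p: "\<And>r. r \<in> {0..1} \<Longrightarrow> \<exists>\<tau>\<in>{0..1}. G r = p \<tau> \<and>
       curve_length G 0 r \<le> curve_length p 0 \<tau> \<and> curve_length G r 1 \<le> curve_length p \<tau> 1"
    using path_contains_arc_with_lengths[OF p(1) _ p(5)] unfolding p(2,3) by blast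
  have "path_image G \<subseteq> D"
    using through_p p(4) by (force simp: path_image_def)
  show ?thesis
  proof (rule that[OF G(1-3) \<open>path_image G \<subseteq> D\<close>])
    show "variation G 0 1 < \<infinity>" using G(4) by (simp add: less_top)
    fix r :: real assume "r \<in> {0<..<1}"
    then obtain \<tau> where \<tau>: "\<tau> \<in> {0..1}" "G r = p \<tau>"
      and le: "curve_length G 0 r \<le> curve_length p 0 \<tau>" "curve_length G r 1 \<le> curve_length p \<tau> 1"
      using through_p[of r] by auto
    have "psi \<phi> (min (curve_length G 0 r) (curve_length G r 1))
        \<le> psi \<phi> (min (curve_length p 0 \<tau>) (curve_length p \<tau> 1))"
      using le by (intro psi_mono[OF phi]) (auto simp: curve_length_nonneg)
    also have "\<dots> \<le> c * infdist (G r) (frontier D)" using p(6)[OF \<tau>(1)] \<tau>(2) by simp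
    finally show "ball (G r) (psi \<phi> (min (curve_length G 0 r) (curve_length G r 1)) / c) \<subseteq> D"
      using \<open>c > 0\<close> \<tau> p(4)
      by (intro ball_subset_if_le_infdist_frontier) (auto simp: divide_le_eq mult.commute)
  qed
qed

lemma psi_John_imp_cigar_John:
  fixes D :: "'a::euclidean_space set"
  assumes phi: "phi_cond \<phi>" and "open D" "D \<noteq> {}" and "psi_John (psi \<phi>) D \<alpha> \<beta>"
  shows "\<exists>cJ. cigar_John \<phi> D cJ"
proof -
  obtain x0 c where "x0 \<in> D" "c > 0"
    and carrots: "\<And>x. x \<in> D \<Longrightarrow> \<exists>\<gamma> L. carrot \<phi> D c \<gamma> L \<and> \<gamma> 0 = x \<and> \<gamma> L = x0"
    by (rule psi_John_carrots[OF assms]) blast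
  have "cigar_John \<phi> D c"
    unfolding cigar_John_def
  proof (intro conjI ballI impI \<open>c > 0\<close>)
    fix a b assume "a \<in> D" "b \<in> D" "a \<noteq> b"
    obtain \<gamma>a La where a: "carrot \<phi> D c \<gamma>a La" "\<gamma>a 0 = a" "\<gamma>a La = x0"
      using carrots[OF \<open>a \<in> D\<close>] by blast
    obtain \<gamma>b Lb where b: "carrot \<phi> D c \<gamma>b Lb" "\<gamma>b 0 = b" "\<gamma>b Lb = x0"
      using carrots[OF \<open>b \<in> D\<close>] by blast
    have "\<gamma>a La = \<gamma>b Lb" "\<gamma>a 0 \<noteq> \<gamma>b 0" using a(2,3) b(2,3) \<open>a \<noteq> b\<close> by simp_all
    from cigar_arc_of_carrots[OF phi \<open>c > 0\<close> a(1) b(1) this]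
    obtain g where "arc g" "pathstart g = a" "pathfinish g = b" "path_image g \<subseteq> D"
      "variation g 0 1 < \<infinity>"
      "\<And>t. t \<in> {0<..<1} \<Longrightarrow> ball (g t) (psi \<phi> (min (curve_length g 0 t) (curve_length g t 1)) / c) \<subseteq> D"
      unfolding a(2) b(2) by blast
    then show "\<exists>g. arc g \<and> pathstart g = a \<and> pathfinish g = b \<and> path_image g \<subseteq> D \<and>
        variation g 0 1 < \<infinity> \<and>
        (\<forall>t\<in>{0<..<1}. ball (g t) (psi \<phi> (min (curve_length g 0 t) (curve_length g t 1)) / c) \<subseteq> D)"
      by (intro exI[of _ g] conjI ballI)
  qed
  then show ?thesis ..
qed

section \<open>From cigar John domains to \<open>\<psi>\<close>-John domains\<close>

lemma cigar_John_curve: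
  fixes D :: "'a::euclidean_space set"
  assumes "cigar_John \<phi> D cJ" "a \<in> D" "b \<in> D" "a \<noteq> b"
  obtains \<gamma> L where "0 < L" "dist a b \<le> L" "continuous_on {0..L} \<gamma>" "\<gamma> ` {0..L} \<subseteq> D"
    "\<gamma> 0 = a" "\<gamma> L = b" "arclength_parametrized \<gamma> L"
    "\<And>t. 0 < t \<Longrightarrow> t < L \<Longrightarrow> ball (\<gamma> t) (psi \<phi> (min t (L - t)) / cJ) \<subseteq> D"
proof -
  obtain g where g: "arc g" "pathstart g = a" "pathfinish g = b" "path_image g \<subseteq> D"
    "variation g 0 1 < \<infinity>"
    and g_ball: "\<And>t. t \<in> {0<..<1} \<Longrightarrow>
       ball (g t) (psi \<phi> (min (curve_length g 0 t) (curve_length g t 1)) / cJ) \<subseteq> D"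
    using assms unfolding cigar_John_def by metis
  have fin: "variation g 0 1 \<noteq> \<infinity>" using g(5) by auto
  define L where "L = curve_length g 0 1"
  obtain \<gamma> where \<gamma>: "continuous_on {0..L} \<gamma>" "\<gamma> ` {0..L} = path_image g" "\<gamma> 0 = g 0" "\<gamma> L = g 1"
      "arclength_parametrized \<gamma> L"
    and \<gamma>_g: "\<And>t. t \<in> {0..L} \<Longrightarrow>
      \<exists>u\<in>{0..1}. \<gamma> t = g u \<and> curve_length g 0 u = t \<and> curve_length g u 1 = L - t"
    using arc_arclength_reparametrization[OF g(1) fin] unfolding L_def by blast
  have "dist a b \<le> L"
    using dist_le_variation[of 0 1 g] variation_eq_curve_length[OF fin, of 0 1] g(2,3)
    by (simp add: L_def pathstart_def pathfinish_def)
  show ?thesis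
  proof
    show "0 < L" using \<open>dist a b \<le> L\<close> \<open>a \<noteq> b\<close> by (meson dist_pos_lt order_less_le_trans)
    show "\<gamma> 0 = a" "\<gamma> L = b" using \<gamma>(3,4) g(2,3) by (simp_all add: pathstart_def pathfinish_def)
    fix t assume t: "0 < t" "t < L"
    then obtain u where u: "u \<in> {0..1}" "\<gamma> t = g u" "curve_length g 0 u = t" "curve_length g u 1 = L - t"
      using \<gamma>_g[of t] by auto
    have "u \<noteq> 0" "u \<noteq> 1" using u(3,4) t by (auto simp: curve_length_def)
    then have "u \<in> {0<..<1}" using u(1) by auto
    then show "ball (\<gamma> t) (psi \<phi> (min t (L - t)) / cJ) \<subseteq> D" using g_ball[of u] u by simp
  qed (use \<gamma> g \<open>dist a b \<le> L\<close> in auto)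
qed

lemma infdist_frontier_le_half_diameter:
  fixes D :: "'a::euclidean_space set"
  assumes "x \<in> D" "bounded D"
  shows "2 * infdist x (frontier D) \<le> diameter D"
proof (cases "infdist x (frontier D) = 0")
  case False
  then have "0 < infdist x (frontier D)" using infdist_nonneg by (metis order_le_less)
  then show ?thesis
    using diameter_ge_ball[OF ball_subset_if_le_infdist_frontier[OF assms(1) order_refl] assms(2)]
    by simp
qed (simp add: diameter_ge_0 assms(2))

text \<open>A cigar curve through its midpoint \<open>\<gamma> (L/2)\<close> carries a ball of radius \<open>\<psi>(L/2)/c\<^sub>J\<close>,
  which is linear in \<open>L\<close> once \<open>L \<ge> 2\<close>.\<close>
lemma cigar_curve_length_le:
  fixes D :: "'a::euclidean_space set"
  assumes phi: "phi_cond \<phi>" and "bounded D" "cJ > 0" "0 < L"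
    and ball: "ball c (psi \<phi> (L / 2) / cJ) \<subseteq> D"
  shows "L \<le> max 2 (cJ * diameter D / \<phi> 1)"
proof (cases "L \<le> 2")
  case False
  have "2 * (psi \<phi> (L / 2) / cJ) \<le> diameter D"
    using diameter_ge_ball[OF ball \<open>bounded D\<close>] psi_pos[OF phi, of "L / 2"] assms by simp
  moreover have "psi \<phi> (L / 2) = \<phi> 1 * (L / 2)" using False by (intro psi_linear) simp
  ultimately have "L \<le> cJ * diameter D / \<phi> 1"
    using \<open>cJ > 0\<close> phi_cond_facts(3)[OF phi] by (simp add: field_simps)
  then show ?thesis by simp
qed simp

text \<open>Starting a cigar curve close to the boundary and going to a point more than \<open>2 q\<close> away,
  the ball at time \<open>q\<close> has radius \<open>\<psi>(q)/c\<^sub>J\<close> and lies within distance \<open>q\<close> of the boundary.\<close>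
lemma cigar_John_psi_le_linear:
  fixes D :: "'a::euclidean_space set"
  assumes "open D" "bounded D" "D \<noteq> {}" "cigar_John \<phi> D cJ" "0 < q" "q < diameter D / 4"
  shows "psi \<phi> q \<le> cJ * q"
proof -
  have "frontier D \<noteq> {}" using frontier_not_empty assms(2,3) not_bounded_UNIV by metis
  then obtain z where z: "z \<in> frontier D" by blast
  have "psi \<phi> q / cJ \<le> q + e" if "0 < e" for e
  proof -
    obtain a where a: "a \<in> D" "dist a z < e"
      using z \<open>0 < e\<close> closure_approachable[of z D] by (auto simp: frontier_def)
    obtain b where b: "b \<in> D" "2 * q < dist a b"
      using exists_far_point[OF a(1), of "2 * q"] assms(6) by auto
    have "a \<noteq> b" using b(2) assms(5) by auto
    then obtain \<gamma> L where "dist a b \<le> L" "\<gamma> 0 = a" "arclength_parametrized \<gamma> L"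
      and balls: "\<And>t. 0 < t \<Longrightarrow> t < L \<Longrightarrow> ball (\<gamma> t) (psi \<phi> (min t (L - t)) / cJ) \<subseteq> D"
      using cigar_John_curve[OF assms(4) a(1) b(1)] by blast
    then have "ball (\<gamma> q) (psi \<phi> q / cJ) \<subseteq> D" using b(2) assms(5) balls[of q] by simp
    then have "psi \<phi> q / cJ \<le> infdist (\<gamma> q) (frontier D)"
      by (rule le_infdist_frontier_if_ball_subset[OF \<open>open D\<close> _ \<open>frontier D \<noteq> {}\<close>])
    also have "\<dots> \<le> infdist a (frontier D) + dist (\<gamma> q) a" by (rule infdist_triangle)
    also have "\<dots> \<le> dist a z + q"
      using infdist_le[OF z, of a] dist_le_arclength[OF \<open>arclength_parametrized \<gamma> L\<close>, of 0 q]
        \<open>\<gamma> 0 = a\<close> \<open>dist a b \<le> L\<close> b(2) assms(5) by (simp add: dist_commute)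
    finally show ?thesis using a(2) by simp
  qed
  then have "psi \<phi> q / cJ \<le> q" by (rule field_le_epsilon)
  moreover have "cJ > 0" using assms(4) by (simp add: cigar_John_def)
  ultimately show ?thesis by (simp add: divide_le_eq mult.commute)
qed

lemma cigar_John_deep_point:
  fixes D :: "'a::euclidean_space set"
  assumes phi: "phi_cond \<phi>" and "open D" "bounded D" "D \<noteq> {}" "cigar_John \<phi> D cJ"
  defines "s \<equiv> 1 / (2 * cJ) * psi \<phi> (diameter D / 4)"
  obtains x0 where "x0 \<in> D" "2 * s < infdist x0 (frontier D)" "0 < s" "s < diameter D / 4"
proof -
  have "frontier D \<noteq> {}" using frontier_not_empty assms(3,4) not_bounded_UNIV by metis
  have "cJ > 0" using assms(5) by (simp add: cigar_John_def)
  have "diameter D > 0" by (rule diameter_pos[OF assms(2,4,3)])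
  obtain a b where ab: "a \<in> D" "b \<in> D" "diameter D / 2 < dist a b"
    using exists_far_pair[OF \<open>D \<noteq> {}\<close>, of "diameter D / 2"] \<open>diameter D > 0\<close> by auto
  then have "a \<noteq> b" using \<open>diameter D > 0\<close> by auto
  then obtain \<gamma> L where "0 < L" "dist a b \<le> L" "\<gamma> ` {0..L} \<subseteq> D"
    and balls: "\<And>t. 0 < t \<Longrightarrow> t < L \<Longrightarrow> ball (\<gamma> t) (psi \<phi> (min t (L - t)) / cJ) \<subseteq> D"
    using cigar_John_curve[OF assms(5) ab(1,2)] by blast
  define x0 where "x0 = \<gamma> (L / 2)"
  show ?thesis
  proof
    show "x0 \<in> D" using \<open>\<gamma> ` {0..L} \<subseteq> D\<close> \<open>0 < L\<close> by (auto simp: x0_def)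
    have "psi \<phi> (diameter D / 4) < psi \<phi> (L / 2)"
      using ab(3) \<open>dist a b \<le> L\<close> \<open>diameter D > 0\<close> by (intro psi_strict_mono[OF phi]) auto
    also have "psi \<phi> (L / 2) / cJ \<le> infdist x0 (frontier D)"
      using balls[of "L / 2"] \<open>0 < L\<close> unfolding x0_def
      by (intro le_infdist_frontier_if_ball_subset[OF \<open>open D\<close> _ \<open>frontier D \<noteq> {}\<close>]) simp_all
    finally show "2 * s < infdist x0 (frontier D)"
      using \<open>cJ > 0\<close> by (simp add: s_def divide_strict_right_mono)
    then show "s < diameter D / 4"
      using infdist_frontier_le_half_diameter[OF \<open>x0 \<in> D\<close> \<open>bounded D\<close>] by simp
    show "0 < s" unfolding s_def using psi_pos[OF phi] \<open>diameter D > 0\<close> \<open>cJ > 0\<close> by simp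
  qed
qed

text \<open>Within distance \<open>s\<close> of the \<open>2 s\<close>-deep end point the curve is \<open>s\<close>-deep, elsewhere on its
  second half the cigar balls have radius at least \<open>\<psi>(s)/c\<^sub>J\<close>.\<close>
lemma cigar_curve_second_half_deep:
  fixes D :: "'a::euclidean_space set"
  assumes phi: "phi_cond \<phi>" and "open D" "frontier D \<noteq> {}" "cJ > 0"
    and arc: "arclength_parametrized \<gamma> L" and "\<gamma> L = x0"
    and balls: "\<And>t. 0 < t \<Longrightarrow> t < L \<Longrightarrow> ball (\<gamma> t) (psi \<phi> (min t (L - t)) / cJ) \<subseteq> D"
    and s: "0 < s" "psi \<phi> s \<le> cJ * s" "2 * s < infdist x0 (frontier D)"
    and t: "L / 2 < t" "t \<le> L"
  shows "psi \<phi> s / cJ \<le> infdist (\<gamma> t) (frontier D)"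
proof (cases "s \<le> L - t")
  case True
  then have "psi \<phi> s \<le> psi \<phi> (min t (L - t))" using t s(1) by (intro psi_mono[OF phi]) auto
  then have "psi \<phi> s / cJ \<le> psi \<phi> (min t (L - t)) / cJ" using \<open>cJ > 0\<close> by (simp add: divide_right_mono)
  also have "\<dots> \<le> infdist (\<gamma> t) (frontier D)"
    using True t s(1) by (intro le_infdist_frontier_if_ball_subset[OF \<open>open D\<close> balls \<open>frontier D \<noteq> {}\<close>]) auto
  finally show ?thesis .
next
  case False
  have "dist x0 (\<gamma> t) \<le> L - t"
    using dist_le_arclength[OF arc, of t L] t \<open>\<gamma> L = x0\<close> by (simp add: dist_commute)
  then have "s \<le> infdist (\<gamma> t) (frontier D)"
    using infdist_triangle[of x0 "frontier D" "\<gamma> t"] s(3) False by linarith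
  moreover have "psi \<phi> s / cJ \<le> s" using s(2) \<open>cJ > 0\<close> by (simp add: divide_le_eq mult.commute)
  ultimately show ?thesis by simp
qed

lemma psi_le_along_cigar_curve:
  fixes D :: "'a::euclidean_space set"
  assumes phi: "phi_cond \<phi>" and "open D" "frontier D \<noteq> {}" "cJ > 0"
    and "0 < L" "L \<le> \<beta>" "1 \<le> \<beta>" and arc: "arclength_parametrized \<gamma> L" and "\<gamma> L = x0"
    and balls: "\<And>t. 0 < t \<Longrightarrow> t < L \<Longrightarrow> ball (\<gamma> t) (psi \<phi> (min t (L - t)) / cJ) \<subseteq> D"
    and s: "0 < s" "psi \<phi> s \<le> cJ * s" "psi \<phi> s \<le> \<phi> 1 * \<beta>" "2 * s < infdist x0 (frontier D)"
    and t: "t \<in> {0..L}"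
  defines "\<alpha> \<equiv> cJ * \<phi> 1 * \<beta>\<^sup>2 / psi \<phi> s"
  shows "psi \<phi> t \<le> \<alpha> / L * infdist (\<gamma> t) (frontier D)"
proof -
  have "\<phi> 1 > 0" "psi \<phi> s > 0" using phi_cond_facts(3)[OF phi] psi_pos[OF phi s(1)] by simp_all
  have I0: "0 \<le> infdist (\<gamma> t) (frontier D)" by (rule infdist_nonneg)
  consider "t = 0" | "0 < t" "t \<le> L / 2" | "L / 2 < t" using t by fastforce
  then show ?thesis
  proof cases
    case 1
    then show ?thesis using psi_0[OF phi] I0 \<open>0 < L\<close> \<open>\<phi> 1 > 0\<close> \<open>psi \<phi> s > 0\<close> \<open>cJ > 0\<close>
      by (simp add: \<alpha>_def)
  next
    case 2
    have ratio: "1 \<le> \<phi> 1 * \<beta> / psi \<phi> s" using s(3) \<open>psi \<phi> s > 0\<close> by simp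
    have "cJ * \<beta> \<le> cJ * \<beta> * (\<phi> 1 * \<beta> / psi \<phi> s)"
      using mult_left_mono[OF ratio, of "cJ * \<beta>"] \<open>cJ > 0\<close> \<open>1 \<le> \<beta>\<close> by simp
    then have "cJ * L \<le> cJ * \<beta> * (\<phi> 1 * \<beta> / psi \<phi> s)"
      using \<open>L \<le> \<beta>\<close> \<open>cJ > 0\<close> by (smt (verit) mult_left_mono)
    then have cJ_le: "cJ \<le> \<alpha> / L"
      using \<open>0 < L\<close> \<open>psi \<phi> s > 0\<close> by (simp add: \<alpha>_def power2_eq_square field_simps)
    have "ball (\<gamma> t) (psi \<phi> t / cJ) \<subseteq> D" using balls[of t] 2 \<open>0 < L\<close> by simp
    then have "psi \<phi> t / cJ \<le> infdist (\<gamma> t) (frontier D)"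
      by (rule le_infdist_frontier_if_ball_subset[OF \<open>open D\<close> _ \<open>frontier D \<noteq> {}\<close>])
    then have "psi \<phi> t \<le> cJ * infdist (\<gamma> t) (frontier D)"
      using \<open>cJ > 0\<close> by (simp add: pos_divide_le_eq mult.commute)
    also have "\<dots> \<le> \<alpha> / L * infdist (\<gamma> t) (frontier D)" using cJ_le I0 by (rule mult_right_mono)
    finally show ?thesis .
  next
    case 3
    have "psi \<phi> t \<le> psi \<phi> \<beta>" using t \<open>L \<le> \<beta>\<close> by (intro psi_mono[OF phi]) auto
    also have "\<dots> = \<phi> 1 * \<beta>" using \<open>1 \<le> \<beta>\<close> by (rule psi_linear)
    also have "\<dots> \<le> \<phi> 1 * \<beta> * (\<beta> / L)"
      using \<open>L \<le> \<beta>\<close> \<open>0 < L\<close> \<open>\<phi> 1 > 0\<close> \<open>1 \<le> \<beta>\<close> by (simp add: mult_le_cancel_left1 field_simps)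
    also have "\<dots> = \<alpha> / L * (psi \<phi> s / cJ)"
      using \<open>cJ > 0\<close> \<open>psi \<phi> s > 0\<close> by (simp add: \<alpha>_def power2_eq_square field_simps)
    also have "\<dots> \<le> \<alpha> / L * infdist (\<gamma> t) (frontier D)"
      using cigar_curve_second_half_deep[OF phi assms(2-4) arc \<open>\<gamma> L = x0\<close> balls s(1,2,4)] 3 t
        \<open>cJ > 0\<close> \<open>psi \<phi> s > 0\<close> \<open>\<phi> 1 > 0\<close> \<open>0 < L\<close>
      by (intro mult_left_mono) (auto simp: \<alpha>_def)
    finally show ?thesis .
  qed
qed

lemma cigar_John_imp_psi_John:
  fixes D :: "'a::euclidean_space set"
  assumes phi: "phi_cond \<phi>" and "open D" "D \<noteq> {}" "bounded D" and cigar: "cigar_John \<phi> D cJ"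
  shows "psi_John (psi \<phi>) D
           (cJ * \<phi> 1 * (max 2 (cJ * diameter D / \<phi> 1))\<^sup>2 /
              psi \<phi> (1 / (2 * cJ) * psi \<phi> (diameter D / 4)))
           (max 2 (cJ * diameter D / \<phi> 1))"
proof -
  define \<beta> where "\<beta> = max 2 (cJ * diameter D / \<phi> 1)"
  define s where "s = 1 / (2 * cJ) * psi \<phi> (diameter D / 4)"
  define \<alpha> where "\<alpha> = cJ * \<phi> 1 * \<beta>\<^sup>2 / psi \<phi> s"
  have "cJ > 0" using cigar by (simp add: cigar_John_def)
  have "\<phi> 1 > 0" by (rule phi_cond_facts(3)[OF phi])
  have "frontier D \<noteq> {}" using frontier_not_empty assms(3,4) not_bounded_UNIV by metis
  obtain x0 where "x0 \<in> D" and deep: "2 * s < infdist x0 (frontier D)"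
    and "0 < s" "s < diameter D / 4"
    using cigar_John_deep_point[OF phi assms(2,4,3) cigar] unfolding s_def by blast
  then have "psi \<phi> s \<le> cJ * s"
    using cigar_John_psi_le_linear[OF assms(2,4,3) cigar] by simp
  also have "\<dots> \<le> cJ * diameter D"
    using \<open>s < diameter D / 4\<close> \<open>cJ > 0\<close> \<open>0 < s\<close> by simp
  also have "\<dots> = \<phi> 1 * (cJ * diameter D / \<phi> 1)" using \<open>\<phi> 1 > 0\<close> by simp
  also have "\<dots> \<le> \<phi> 1 * \<beta>" using \<open>\<phi> 1 > 0\<close> by (intro mult_left_mono) (simp_all add: \<beta>_def)
  finally have s_le: "psi \<phi> s \<le> \<phi> 1 * \<beta>" .
  have "0 < \<alpha>" using \<open>cJ > 0\<close> \<open>\<phi> 1 > 0\<close> psi_pos[OF phi \<open>0 < s\<close>] by (simp add: \<alpha>_def \<beta>_def)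
  have "\<exists>(\<gamma>::real \<Rightarrow> 'a) L. 0 \<le> L \<and> L \<le> \<beta> \<and> continuous_on {0..L} \<gamma> \<and> \<gamma> ` {0..L} \<subseteq> D \<and>
      \<gamma> 0 = x \<and> \<gamma> L = x0 \<and> arclength_parametrized \<gamma> L \<and>
      (\<forall>t\<in>{0..L}. psi \<phi> t \<le> \<alpha> / L * infdist (\<gamma> t) (frontier D))" if "x \<in> D" for x
  proof (cases "x = x0")
    case True
    then show ?thesis using \<open>x0 \<in> D\<close> psi_0[OF phi] arclength_parametrized_0[of "\<lambda>_. x0"]
      by (intro exI[of _ "\<lambda>_. x0"] exI[of _ 0]) (auto simp: \<beta>_def)
  next
    case False
    then obtain \<gamma> L where \<gamma>: "0 < L" "continuous_on {0..L} \<gamma>" "\<gamma> ` {0..L} \<subseteq> D"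
      "\<gamma> 0 = x" "\<gamma> L = x0" "arclength_parametrized \<gamma> L"
      and balls: "\<And>t. 0 < t \<Longrightarrow> t < L \<Longrightarrow> ball (\<gamma> t) (psi \<phi> (min t (L - t)) / cJ) \<subseteq> D"
      using cigar_John_curve[OF cigar \<open>x \<in> D\<close> \<open>x0 \<in> D\<close>] by blast
    have "ball (\<gamma> (L / 2)) (psi \<phi> (L / 2) / cJ) \<subseteq> D" using balls[of "L / 2"] \<open>0 < L\<close> by simp
    then have "L \<le> \<beta>" unfolding \<beta>_def
      by (rule cigar_curve_length_le[OF phi \<open>bounded D\<close> \<open>cJ > 0\<close> \<open>0 < L\<close>])
    moreover have "\<forall>t\<in>{0..L}. psi \<phi> t \<le> \<alpha> / L * infdist (\<gamma> t) (frontier D)"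
      using psi_le_along_cigar_curve[OF phi \<open>open D\<close> \<open>frontier D \<noteq> {}\<close> \<open>cJ > 0\<close> \<open>0 < L\<close>
          \<open>L \<le> \<beta>\<close> _ \<gamma>(6,5) balls \<open>0 < s\<close> \<open>psi \<phi> s \<le> cJ * s\<close> s_le deep]
      by (simp add: \<alpha>_def \<beta>_def)
    ultimately show ?thesis using \<gamma>(2-6) \<open>0 < L\<close> by (intro exI[of _ \<gamma>] exI[of _ L]) simp
  qed
  then show ?thesis
    unfolding s_def[symmetric] \<beta>_def[symmetric] \<alpha>_def[symmetric] psi_John_def
      arclength_parametrized_def[symmetric]
    using \<open>bounded D\<close> \<open>0 < \<alpha>\<close> \<open>x0 \<in> D\<close> by (auto simp: \<beta>_def)
qed

theorem theorem2p3:
  fixes \<phi> :: "real \<Rightarrow> real" and D :: "'a::euclidean_space set"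
  assumes "phi_cond \<phi>" and "DIM('a) \<ge> 2"
    and "open D" and "connected D" and "D \<noteq> {}" and "bounded D"
  shows "((\<exists>\<alpha> \<beta>. psi_John (psi \<phi>) D \<alpha> \<beta>) \<longrightarrow> (\<exists>cJ. cigar_John \<phi> D cJ)) \<and>
         (\<forall>cJ. cigar_John \<phi> D cJ \<longrightarrow>
            psi_John (psi \<phi>) D
              (cJ * \<phi> 1 * (max 2 (cJ * diameter D / \<phi> 1))\<^sup>2 /
                 psi \<phi> (1 / (2 * cJ) * psi \<phi> (diameter D / 4)))
              (max 2 (cJ * diameter D / \<phi> 1)))"
proof (intro conjI impI allI)
  show "\<exists>cJ. cigar_John \<phi> D cJ" if "\<exists>\<alpha> \<beta>. psi_John (psi \<phi>) D \<alpha> \<beta>"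
    using that psi_John_imp_cigar_John[OF assms(1,3,5)] by blast
qed (rule cigar_John_imp_psi_John[OF assms(1,3,5,6)])

end
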